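(* Let $n>k\ge1$ and $0\le r\le k$. The number of pairs $(A,B)\in M_k(\mathbb{F}_q)\times M_{k,n-k}(\mathbb{F}_q)$ with $\operatorname{rank}\mathcal{C}(A,B)=r$ (i.e. with $r$-dimensional reachability subspace) is $${k\brack r}_q\, q^{(k-r)^2}\prod_{i=k-r+1}^{k}(q^n-q^i).$$ In particular, the number of reachable pairs (those with $\operatorname{rank}\mathcal{C}(A,B)=k$) is $\prod_{i=1}^{k}(q^n-q^i)$.
   Context: $\mathbb{F}_q$ is the finite field with $q$ elements. For $(A,B)\in M_k(\mathbb{F}_q)\times M_{k,n-k}(\mathbb{F}_q)$, the reachability matrix is $\mathcal{C}(A,B)=[\,B\ \ AB\ \ \cdots\ \ A^{k-1}B\,]$. ${k\brack r}_q=\prod_{i=0}^{r-1}\frac{q^{k-i}-1}{q^{i+1}-1}$ denotes the $q$-binomial coefficient (the number of $r$-dimensional subspaces of $\mathbb{F}_q^k$). Empty products equal $1$. *)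

theory Defs
  imports "Jordan_Normal_Form.DL_Rank"
begin

definition reach_mat :: "'a::field mat \<Rightarrow> 'a mat \<Rightarrow> 'a mat" where
  "reach_mat A B = mat_of_cols (dim_row A)
     (concat (map (\<lambda>j. cols (A ^\<^sub>m j * B)) [0..<dim_row A]))"

definition qbinom :: "nat \<Rightarrow> nat \<Rightarrow> nat \<Rightarrow> rat" where
  "qbinom q k r = (\<Prod>i<r. (of_nat q ^ (k - i) - 1) / (of_nat q ^ (i + 1) - 1))"

end

theory Submission
  imports Defs "HOL-Library.Cardinality"
begin

text \<open>
  The reachable subspace $R(A, B)$, the smallest $A$-invariant subspace containing the columns
  of $B$, is the column space of $\mathcal{C}(A, B)$, so its dimension is the rank.  A change of
  basis by $Q \in \mathrm{GL}_k$ moves $R(A, B)$ to $Q\,R(A, B)$, hence the number of pairs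
  with $R(A, B) = V$ depends only on $r = \dim V$; for $V = \mathbb{F}^r \times 0$ the pairs are
  block triangular with a reachable $r \times r$ corner, giving $q^{k(k-r)} \rho_r$ pairs,
  where $\rho_r$ counts the reachable pairs of size $r$.  Double counting the triples $(A, B, Q)$
  where the first $r$ columns of $Q$ span $R(A, B)$ yields
  $N_r = {k \brack r}_q\, q^{k(k-r)} \rho_r$.  Since $\sum_r N_r = q^{k(k+m)}$ with
  $m = n - k$, the $\rho_r$ are determined recursively, and the $q$-binomial expansion
  $x^k = \sum_j {k \brack j}_q\, q^{(k-j)^2} \prod_{t<j} (x - q^{k-t})$ at $x = q^{k+m}$
  shows $\rho_r = \prod_{t<r} (q^{r+m} - q^{r-t})$.
\<close>

section \<open>Vectors and matrices over a finite field\<close>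

lemma card_carrier_vec: "card (carrier_vec n :: 'a::finite vec set) = CARD('a) ^ n"
proof -
  have "bij_betw (\<lambda>v. restrict (($) v) {..<n}) (carrier_vec n :: 'a vec set) ({..<n} \<rightarrow>\<^sub>E UNIV)"
  proof (rule bij_betwI[where g = "vec n"])
    show "vec n (restrict (($) x) {..<n}) = x" if "x \<in> carrier_vec n" for x :: "'a vec"
      using that by (intro eq_vecI) auto
    show "restrict (($) (vec n y :: 'a vec)) {..<n} = y" if "y \<in> {..<n} \<rightarrow>\<^sub>E UNIV" for y
      using that by (auto simp: PiE_def extensional_def fun_eq_iff)
  qed auto
  then show ?thesis by (simp add: bij_betw_same_card card_PiE)
qed

lemma finite_carrier_vec [simp]: "finite (carrier_vec n :: 'a::finite vec set)"
  by (rule card_ge_0_finite) (simp add: card_carrier_vec)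

lemma card_carrier_mat: "card (carrier_mat a b :: 'a::finite mat set) = CARD('a) ^ (a * b)"
proof -
  let ?S = "{..<a} \<times> {..<b}"
  have "bij_betw (\<lambda>M. restrict (($$) M) ?S) (carrier_mat a b :: 'a mat set) (?S \<rightarrow>\<^sub>E UNIV)"
  proof (rule bij_betwI[where g = "mat a b"])
    show "mat a b (restrict (($$) x) ?S) = x" if "x \<in> carrier_mat a b" for x :: "'a mat"
      using that by (intro eq_matI) auto
    show "restrict (($$) (mat a b y :: 'a mat)) ?S = y" if "y \<in> ?S \<rightarrow>\<^sub>E UNIV" for y
      using that by (auto simp: PiE_def extensional_def fun_eq_iff)
  qed auto
  then show ?thesis by (simp add: bij_betw_same_card card_PiE card_cartesian_product)
qed

lemma finite_carrier_mat [simp]: "finite (carrier_mat a b :: 'a::finite mat set)"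
  by (rule card_ge_0_finite) (simp add: card_carrier_mat)

lemma CARD_field_ge_2: "CARD('a::{finite,field}) \<ge> 2"
proof -
  have "card {0, 1::'a} \<le> CARD('a)" by (intro card_mono) auto
  then show ?thesis by simp
qed

lemma mult_mat_vec_index_sum:
  assumes "M \<in> carrier_mat k n" "x \<in> carrier_vec n" "i < k"
  shows "(M *\<^sub>v x) $ i = (\<Sum>j<n. M $$ (i, j) * x $ j)"
  using assms by (auto simp: scalar_prod_def lessThan_atLeast0 intro!: sum.cong)

lemma mult_mat_unit_vec:
  fixes M :: "'a::field mat"
  assumes "M \<in> carrier_mat k n" "i < n"
  shows "M *\<^sub>v unit_vec n i = col M i"
  using assms by (intro eq_vecI)
    (auto simp: scalar_prod_def unit_vec_def sum.delta' if_distrib cong: if_cong)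

lemma mult_mat_zero_vec: "M \<in> carrier_mat k n \<Longrightarrow> M *\<^sub>v 0\<^sub>v n = (0\<^sub>v k :: 'a::field vec)"
  by (intro eq_vecI) (auto simp: scalar_prod_def)

section \<open>Subspaces of $\mathbb{F}^k$\<close>

text \<open>Subspaces are handled elementarily as closed subsets of \<open>carrier_vec k\<close>;
  \<open>mat_range_eq_col_space\<close> links them to the rank of \<open>vec_space\<close>.\<close>

definition is_subspace :: "nat \<Rightarrow> 'a::field vec set \<Rightarrow> bool" where
  "is_subspace k V \<longleftrightarrow> V \<subseteq> carrier_vec k \<and> 0\<^sub>v k \<in> V \<and> (\<forall>x\<in>V. \<forall>y\<in>V. x + y \<in> V)
     \<and> (\<forall>c. \<forall>x\<in>V. c \<cdot>\<^sub>v x \<in> V)"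

definition span_vec :: "nat \<Rightarrow> 'a::field vec set \<Rightarrow> 'a vec set" where
  "span_vec k S = \<Inter>{V. is_subspace k V \<and> S \<subseteq> V}"

definition mat_range :: "'a::field mat \<Rightarrow> 'a vec set" where
  "mat_range M = (\<lambda>x. M *\<^sub>v x) ` carrier_vec (dim_col M)"

lemma is_subspace_carrier: "is_subspace k (carrier_vec k)"
  by (auto simp: is_subspace_def)

lemma is_subspace_zero: "is_subspace k {0\<^sub>v k}"
  by (auto simp: is_subspace_def)

lemma is_subspaceD:
  assumes "is_subspace k V"
  shows "V \<subseteq> carrier_vec k" "0\<^sub>v k \<in> V" "x \<in> V \<Longrightarrow> y \<in> V \<Longrightarrow> x + y \<in> V"
    "x \<in> V \<Longrightarrow> c \<cdot>\<^sub>v x \<in> V"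
  using assms by (auto simp: is_subspace_def)

lemma is_subspace_finite: "is_subspace k (V :: 'a::{finite,field} vec set) \<Longrightarrow> finite V"
  using is_subspaceD(1) finite_subset finite_carrier_vec by metis

lemma is_subspace_diff:
  assumes V: "is_subspace k V" and "x \<in> V" "y \<in> V"
  shows "x - y \<in> V"
proof -
  have "x \<in> carrier_vec k" "y \<in> carrier_vec k" using assms is_subspaceD(1) by blast+
  then have "x - y = x + (-1) \<cdot>\<^sub>v y" by (intro eq_vecI) auto
  then show ?thesis using is_subspaceD(3,4)[OF V] assms by simp
qed

lemma is_subspace_Inter:
  "F \<noteq> {} \<Longrightarrow> (\<And>V. V \<in> F \<Longrightarrow> is_subspace k V) \<Longrightarrow> is_subspace k (\<Inter>F)"
  unfolding is_subspace_def by blast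

lemma is_subspace_image:
  assumes P: "P \<in> carrier_mat k n" and V: "is_subspace n V"
  shows "is_subspace k ((\<lambda>x. P *\<^sub>v x) ` V)"
proof -
  have Vc: "V \<subseteq> carrier_vec n" using is_subspaceD(1)[OF V] .
  have "P *\<^sub>v a + P *\<^sub>v b = P *\<^sub>v (a + b)" "c \<cdot>\<^sub>v (P *\<^sub>v a) = P *\<^sub>v (c \<cdot>\<^sub>v a)"
    if "a \<in> V" "b \<in> V" for a b c
  proof -
    have "a \<in> carrier_vec n" "b \<in> carrier_vec n" using that Vc by auto
    then show "P *\<^sub>v a + P *\<^sub>v b = P *\<^sub>v (a + b)" "c \<cdot>\<^sub>v (P *\<^sub>v a) = P *\<^sub>v (c \<cdot>\<^sub>v a)"
      using P by (auto simp: mult_add_distrib_mat_vec mult_mat_vec)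
  qed
  then show ?thesis
    using P Vc is_subspaceD(2-4)[OF V] mult_mat_zero_vec[OF P, symmetric]
    unfolding is_subspace_def by (auto intro!: image_eqI)
qed

lemma is_subspace_preimage:
  assumes P: "P \<in> carrier_mat k n" and V: "is_subspace k V"
  shows "is_subspace n {x \<in> carrier_vec n. P *\<^sub>v x \<in> V}"
  using P is_subspaceD(2-4)[OF V] mult_mat_zero_vec[OF P]
  by (auto simp: is_subspace_def mult_add_distrib_mat_vec mult_mat_vec)

lemma span_vec_is_subspace: "S \<subseteq> carrier_vec k \<Longrightarrow> is_subspace k (span_vec k S)"
  unfolding span_vec_def by (rule is_subspace_Inter) (use is_subspace_carrier in auto)

lemma span_vec_superset: "S \<subseteq> span_vec k S"
  unfolding span_vec_def by auto

lemma span_vec_least: "is_subspace k V \<Longrightarrow> S \<subseteq> V \<Longrightarrow> span_vec k S \<subseteq> V"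
  unfolding span_vec_def by auto

lemma span_vec_mono: "S \<subseteq> T \<Longrightarrow> T \<subseteq> carrier_vec k \<Longrightarrow> span_vec k S \<subseteq> span_vec k T"
  by (meson span_vec_least span_vec_is_subspace span_vec_superset order_trans)

lemma span_vec_unique:
  "is_subspace k V \<Longrightarrow> S \<subseteq> V \<Longrightarrow> (\<And>W. is_subspace k W \<Longrightarrow> S \<subseteq> W \<Longrightarrow> V \<subseteq> W)
    \<Longrightarrow> span_vec k S = V"
  by (meson span_vec_least span_vec_is_subspace span_vec_superset subset_antisym is_subspaceD(1)
      order_trans)

lemma span_vec_empty: "span_vec k {} = {0\<^sub>v k}"
  by (rule span_vec_unique) (auto simp: is_subspace_def)

lemma span_vec_insert:
  assumes v: "v \<in> carrier_vec k" and S: "S \<subseteq> carrier_vec k"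
  shows "span_vec k (insert v S) = {c \<cdot>\<^sub>v v + w | c w. w \<in> span_vec k S}" (is "_ = ?R")
proof (rule span_vec_unique)
  have sub: "is_subspace k (span_vec k S)" using span_vec_is_subspace[OF S] .
  note spanD = is_subspaceD[OF sub]
  have add: "(c \<cdot>\<^sub>v v + w) + (c' \<cdot>\<^sub>v v + w') = (c + c') \<cdot>\<^sub>v v + (w + w')"
    and smult: "d \<cdot>\<^sub>v (c \<cdot>\<^sub>v v + w) = (d * c) \<cdot>\<^sub>v v + d \<cdot>\<^sub>v w"
    if "w \<in> span_vec k S" "w' \<in> span_vec k S" for c c' d w w'
  proof -
    have "w \<in> carrier_vec k" "w' \<in> carrier_vec k" using that spanD(1) by auto
    then show "(c \<cdot>\<^sub>v v + w) + (c' \<cdot>\<^sub>v v + w') = (c + c') \<cdot>\<^sub>v v + (w + w')"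
      "d \<cdot>\<^sub>v (c \<cdot>\<^sub>v v + w) = (d * c) \<cdot>\<^sub>v v + d \<cdot>\<^sub>v w"
      using v by (auto intro!: eq_vecI simp: algebra_simps)
  qed
  have zero: "x = 0 \<cdot>\<^sub>v v + x" and one: "v = 1 \<cdot>\<^sub>v v + 0\<^sub>v k" if "x \<in> carrier_vec k" for x
    using that v by (auto intro!: eq_vecI)
  show "is_subspace k ?R"
    unfolding is_subspace_def
  proof (intro conjI ballI allI)
    show "?R \<subseteq> carrier_vec k" using spanD(1) v by auto
    show "0\<^sub>v k \<in> ?R" using zero[of "0\<^sub>v k"] spanD(2) by auto
  next
    fix x y assume "x \<in> ?R" "y \<in> ?R"
    then show "x + y \<in> ?R" using add spanD(3) by blast
  next
    fix d x assume "x \<in> ?R"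
    then show "d \<cdot>\<^sub>v x \<in> ?R" using smult spanD(4) by blast
  qed
  show "insert v S \<subseteq> ?R"
    using one spanD(2) zero span_vec_superset S v by blast
  fix W assume W: "is_subspace k W" "insert v S \<subseteq> W"
  then have "span_vec k S \<subseteq> W" using span_vec_least by blast
  then show "?R \<subseteq> W" using W is_subspaceD[OF W(1)] by auto
qed

lemma span_vec_insert_absorb:
  assumes v: "v \<in> span_vec k S" and S: "S \<subseteq> carrier_vec k"
  shows "span_vec k (insert v S) = span_vec k S"
proof
  show "span_vec k (insert v S) \<subseteq> span_vec k S"
    using v span_vec_superset by (intro span_vec_least[OF span_vec_is_subspace[OF S]]) auto
  have "v \<in> carrier_vec k" using v is_subspaceD(1)[OF span_vec_is_subspace[OF S]] by blast
  then show "span_vec k S \<subseteq> span_vec k (insert v S)" using S by (intro span_vec_mono) auto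
qed

text \<open>The map $(c, w) \mapsto c v + w$ on $\mathbb{F} \times \mathrm{span}\ S$ is injective.\<close>

lemma card_span_vec_insert:
  fixes v :: "'a::{finite,field} vec"
  assumes v: "v \<in> carrier_vec k" and S: "S \<subseteq> carrier_vec k" and nv: "v \<notin> span_vec k S"
  shows "card (span_vec k (insert v S)) = CARD('a) * card (span_vec k S)"
proof -
  have sub: "is_subspace k (span_vec k S)" using span_vec_is_subspace[OF S] .
  have Sc: "span_vec k S \<subseteq> carrier_vec k" using is_subspaceD(1)[OF sub] .
  have inj: "inj_on (\<lambda>(c, w). c \<cdot>\<^sub>v v + w) (UNIV \<times> span_vec k S)"
  proof (rule inj_onI, clarsimp)
    fix c w c' w'
    assume w: "w \<in> span_vec k S" "w' \<in> span_vec k S" and e: "c \<cdot>\<^sub>v v + w = c' \<cdot>\<^sub>v v + w'"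
    have wc: "w \<in> carrier_vec k" "w' \<in> carrier_vec k" using w Sc by auto
    have ei: "(c - c') * v $ i = w' $ i - w $ i" if "i < k" for i
      using arg_cong[OF e, of "\<lambda>x. x $ i"] that v wc by (auto simp: algebra_simps)
    show "c = c' \<and> w = w'"
    proof (cases "c = c'")
      case True
      then show ?thesis using ei wc by (auto intro!: eq_vecI)
    next
      case False
      then have "v = inverse (c - c') \<cdot>\<^sub>v (w' - w)"
        using ei v wc by (intro eq_vecI) (auto simp: field_simps)
      moreover have "inverse (c - c') \<cdot>\<^sub>v (w' - w) \<in> span_vec k S"
        using is_subspaceD(4)[OF sub is_subspace_diff[OF sub w(2,1)]] .
      ultimately show ?thesis using nv by simp
    qed
  qed
  have "span_vec k (insert v S) = (\<lambda>(c, w). c \<cdot>\<^sub>v v + w) ` (UNIV \<times> span_vec k S)"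
    unfolding span_vec_insert[OF v S] by auto
  then show ?thesis by (simp add: card_image[OF inj] card_cartesian_product)
qed

lemma mat_range_carrier: "M \<in> carrier_mat k n \<Longrightarrow> mat_range M \<subseteq> carrier_vec k"
  unfolding mat_range_def by auto

lemma is_subspace_mat_range: "M \<in> carrier_mat k n \<Longrightarrow> is_subspace k (mat_range M)"
  unfolding mat_range_def by (rule is_subspace_image) (auto simp: is_subspace_carrier)

lemma col_mem_mat_range: "M \<in> carrier_mat k n \<Longrightarrow> i < n \<Longrightarrow> col M i \<in> mat_range M"
  unfolding mat_range_def by (metis mult_mat_unit_vec carrier_matD(2) image_eqI unit_vec_carrier)

text \<open>$M x$ is reached from $0$ by adding the multiples $x_t \cdot \mathrm{col}\ M\ t$ one at a time.\<close>

lemma mat_range_subset: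
  assumes M: "M \<in> carrier_mat k n" and V: "is_subspace k V"
    and cols: "\<And>i. i < n \<Longrightarrow> col M i \<in> V"
  shows "mat_range M \<subseteq> V"
proof
  fix y assume "y \<in> mat_range M"
  then obtain x where x: "x \<in> carrier_vec n" and y: "y = M *\<^sub>v x"
    unfolding mat_range_def using M by auto
  define tr where "tr t = vec n (\<lambda>i. if i < t then x $ i else 0)" for t
  have tc: "tr t \<in> carrier_vec n" for t unfolding tr_def by auto
  have "M *\<^sub>v tr t \<in> V" if "t \<le> n" for t
    using that
  proof (induction t)
    case 0
    have "tr 0 = 0\<^sub>v n" by (auto simp: tr_def)
    then show ?case using is_subspaceD(2)[OF V] mult_mat_zero_vec[OF M] by simp
  next
    case (Suc t)
    have "M *\<^sub>v tr (Suc t) = M *\<^sub>v tr t + x $ t \<cdot>\<^sub>v col M t"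
    proof (rule eq_vecI)
      fix i assume "i < dim_vec (M *\<^sub>v tr t + x $ t \<cdot>\<^sub>v col M t)"
      then have i: "i < k" using M by auto
      have "(M *\<^sub>v tr (Suc t)) $ i
          = (\<Sum>j<n. M $$ (i, j) * tr t $ j + (if j = t then M $$ (i, j) * x $ j else 0))"
        unfolding mult_mat_vec_index_sum[OF M tc i] by (intro sum.cong) (auto simp: tr_def)
      also have "\<dots> = (M *\<^sub>v tr t) $ i + x $ t * M $$ (i, t)"
        using Suc.prems unfolding mult_mat_vec_index_sum[OF M tc i] by (simp add: sum.distrib)
      finally show "(M *\<^sub>v tr (Suc t)) $ i = (M *\<^sub>v tr t + x $ t \<cdot>\<^sub>v col M t) $ i"
        using M i Suc.prems by simp
    qed (use M in auto)
    then show ?case using Suc is_subspaceD(3,4)[OF V] cols by auto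
  qed
  moreover have "tr n = x" using x by (intro eq_vecI) (auto simp: tr_def)
  ultimately show "y \<in> V" using y by auto
qed

lemma mat_range_eq_span_vec:
  assumes M: "M \<in> carrier_mat k n"
  shows "mat_range M = span_vec k (set (cols M))"
proof (rule span_vec_unique[symmetric])
  show "is_subspace k (mat_range M)" using is_subspace_mat_range[OF M] .
  show "set (cols M) \<subseteq> mat_range M" using M col_mem_mat_range[OF M] by (auto simp: cols_def)
  show "mat_range M \<subseteq> W" if "is_subspace k W" "set (cols M) \<subseteq> W" for W
    using that M by (intro mat_range_subset[OF M]) (auto simp: cols_def)
qed

lemma mat_range_eq_col_space: "M \<in> carrier_mat k n \<Longrightarrow> mat_range M = vec_space.col_space k M"
  unfolding vec_space.col_space_eq mat_range_def by auto

lemma (in vec_space) span_maximal_lin_indpt: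
  assumes S: "S \<subseteq> carrier_vec n" and max: "maximal U (\<lambda>T. T \<subseteq> S \<and> lin_indpt T)"
  shows "span U = span S"
proof
  have US: "U \<subseteq> S" and li: "lin_indpt U" using max unfolding maximal_def by auto
  have Uc: "U \<subseteq> carrier_vec n" using US S by auto
  show "span U \<subseteq> span S" by (rule span_is_monotone[OF US])
  have "c \<in> span U" if c: "c \<in> S" for c
  proof (cases "c \<in> U")
    case True
    then show ?thesis using in_own_span[OF Uc] by auto
  next
    case False
    have "lin_dep (insert c U)"
      using max c False US unfolding maximal_def by (metis insert_subset subset_insertI)
    then show ?thesis using lin_dep_iff_in_span[OF Uc li] c S False by auto
  qed
  then show "span S \<subseteq> span U" by (intro span_subsetI[OF Uc]) auto
qed

lemma card_mat_range_trivial_kernel: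
  fixes P :: "'a::{finite,field} mat"
  assumes P: "P \<in> carrier_mat k n" and ker: "\<And>x. x \<in> carrier_vec n \<Longrightarrow> P *\<^sub>v x = 0\<^sub>v k \<Longrightarrow> x = 0\<^sub>v n"
  shows "card (mat_range P) = CARD('a) ^ n"
proof -
  have "inj_on (\<lambda>x. P *\<^sub>v x) (carrier_vec n)"
  proof (rule inj_onI)
    fix x y assume x: "x \<in> carrier_vec n" and y: "y \<in> carrier_vec n" and "P *\<^sub>v x = P *\<^sub>v y"
    then have "P *\<^sub>v (x - y) = 0\<^sub>v k" using P by (simp add: mult_minus_distrib_mat_vec)
    then have "x - y = 0\<^sub>v n" using ker x y by simp
    then have "(x - y) $ i = 0" if "i < n" for i using that by simp
    then have "x $ i = y $ i" if "i < n" for i using that x y by fastforce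
    then show "x = y" using x y by (intro eq_vecI) auto
  qed
  then show ?thesis using P by (simp add: mat_range_def card_image card_carrier_vec)
qed

lemma card_mat_range:
  fixes M :: "'a::{finite,field} mat"
  assumes M: "M \<in> carrier_mat k n"
  shows "card (mat_range M) = CARD('a) ^ vec_space.rank k M"
proof -
  interpret V: vec_space "TYPE('a)" k .
  obtain S where max: "maximal S (\<lambda>T. T \<subseteq> set (cols M) \<and> V.lin_indpt T)"
    using maximal_exists[of "\<lambda>T. T \<subseteq> set (cols M) \<and> V.lin_indpt T" "card (set (cols M))" "{}"]
    by (meson List.finite_set card_mono empty_iff empty_subsetI V.finite_lin_indpt2 rev_finite_subset)
  have SM: "S \<subseteq> set (cols M)" and li: "V.lin_indpt S" using max unfolding maximal_def by auto
  have colsc: "set (cols M) \<subseteq> carrier_vec k" using M cols_dim by blast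
  obtain ds where ds: "set ds = S" "distinct ds"
    using finite_distinct_list[OF finite_subset[OF SM]] by blast
  define P where "P = mat_of_cols k ds"
  have P: "P \<in> carrier_mat k (length ds)" unfolding P_def by auto
  have colsP: "cols P = ds" unfolding P_def using ds SM colsc by (intro cols_mat_of_cols) auto
  have "mat_range M = mat_range P"
    using V.span_maximal_lin_indpt[OF colsc max] colsP ds
    by (simp add: mat_range_eq_col_space[OF M] mat_range_eq_col_space[OF P] V.col_space_def)
  also have "card \<dots> = CARD('a) ^ card S"
    using card_mat_range_trivial_kernel[OF P] V.lin_depI[OF P] li colsP ds
    by (metis distinct_card)
  finally show ?thesis using V.rank_card_indpt[OF M max] by simp
qed

lemma card_mat_range_le:
  "M \<in> carrier_mat k n \<Longrightarrow> card (mat_range (M :: 'a::{finite,field} mat)) \<le> CARD('a) ^ k"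
  using card_mono[OF finite_carrier_vec mat_range_carrier] card_carrier_vec by metis

lemma rank_le_dim_row:
  "M \<in> carrier_mat k n \<Longrightarrow> vec_space.rank k (M :: 'a::{finite,field} mat) \<le> k"
  using card_mat_range card_mat_range_le CARD_field_ge_2[where 'a = 'a]
  by (metis power_le_imp_le_exp Suc_1 Suc_le_lessD)

section \<open>Independent lists and invertible matrices\<close>

definition indep_list :: "nat \<Rightarrow> 'a::field vec list \<Rightarrow> bool" where
  "indep_list k vs \<longleftrightarrow>
     set vs \<subseteq> carrier_vec k \<and> (\<forall>i<length vs. vs ! i \<notin> span_vec k (set (take i vs)))"

lemma indep_list_Nil [simp]: "indep_list k []"
  by (simp add: indep_list_def)

lemma indep_list_snoc:
  "indep_list k (vs @ [v]) \<longleftrightarrow> indep_list k vs \<and> v \<in> carrier_vec k \<and> v \<notin> span_vec k (set vs)"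
  unfolding indep_list_def by (auto simp: nth_append less_Suc_eq)

lemma indep_list_take: "indep_list k vs \<Longrightarrow> indep_list k (take r vs)"
  unfolding indep_list_def by (auto simp: min_def dest: in_set_takeD)

lemma card_span_vec_list_le:
  fixes vs :: "'a::{finite,field} vec list"
  shows "set vs \<subseteq> carrier_vec k \<Longrightarrow> card (span_vec k (set vs)) \<le> CARD('a) ^ length vs"
proof (induction vs rule: rev_induct)
  case Nil
  then show ?case by (simp add: span_vec_empty)
next
  case (snoc v vs)
  then have v: "v \<in> carrier_vec k" and vs: "set vs \<subseteq> carrier_vec k" by auto
  show ?case
  proof (cases "v \<in> span_vec k (set vs)")
    case True
    have "card (span_vec k (set (vs @ [v]))) = card (span_vec k (set vs))"
      using span_vec_insert_absorb[OF True vs] by simp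
    also have "\<dots> \<le> CARD('a) ^ length vs" by (rule snoc.IH[OF vs])
    also have "\<dots> \<le> CARD('a) ^ length (vs @ [v])"
      using CARD_field_ge_2[where 'a = 'a] by (simp add: power_increasing)
    finally show ?thesis .
  next
    case False
    then show ?thesis using snoc.IH[OF vs] card_span_vec_insert[OF v vs] by simp
  qed
qed

lemma card_span_vec_list_eq_iff:
  fixes vs :: "'a::{finite,field} vec list"
  shows "set vs \<subseteq> carrier_vec k \<Longrightarrow>
    card (span_vec k (set vs)) = CARD('a) ^ length vs \<longleftrightarrow> indep_list k vs"
proof (induction vs rule: rev_induct)
  case Nil
  then show ?case by (simp add: span_vec_empty)
next
  case (snoc v vs)
  let ?q = "CARD('a)"
  have q: "?q \<ge> 2" by (rule CARD_field_ge_2)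
  from snoc.prems have v: "v \<in> carrier_vec k" and vs: "set vs \<subseteq> carrier_vec k" by auto
  show ?case
  proof (cases "v \<in> span_vec k (set vs)")
    case True
    have "?q ^ length vs < ?q * ?q ^ length vs" using q by simp
    then have "card (span_vec k (set vs)) < ?q * ?q ^ length vs"
      using card_span_vec_list_le[OF vs] by linarith
    then show ?thesis using True span_vec_insert_absorb[OF True vs] indep_list_snoc by auto
  next
    case False
    then show ?thesis
      unfolding indep_list_snoc using snoc.IH[OF vs] card_span_vec_insert[OF v vs False] v q by auto
  qed
qed

lemma card_span_vec_indep_list:
  "indep_list k (vs :: 'a::{finite,field} vec list) \<Longrightarrow>
    card (span_vec k (set vs)) = CARD('a) ^ length vs"
  using card_span_vec_list_eq_iff indep_list_def by blast

definition indep_lists_in :: "nat \<Rightarrow> (nat \<Rightarrow> 'a::field vec set) \<Rightarrow> nat \<Rightarrow> 'a vec list set" where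
  "indep_lists_in k S t = {vs. length vs = t \<and> indep_list k vs \<and> (\<forall>j<t. vs ! j \<in> S j)}"

lemma indep_lists_in_Suc:
  assumes "\<And>i. S i \<subseteq> carrier_vec k"
  shows "indep_lists_in k S (Suc t)
    = (\<lambda>(vs, v). vs @ [v]) ` (SIGMA vs:indep_lists_in k S t. S t - span_vec k (set vs))"
proof (intro equalityI subsetI)
  fix ws assume ws: "ws \<in> indep_lists_in k S (Suc t)"
  then obtain vs v where wsv: "ws = vs @ [v]"
    unfolding indep_lists_in_def by (metis (mono_tags, lifting) length_Suc_conv_rev mem_Collect_eq)
  have "length vs = t" and all: "\<forall>j<Suc t. (vs @ [v]) ! j \<in> S j"
    using ws wsv unfolding indep_lists_in_def by auto
  then have "vs \<in> indep_lists_in k S t" "v \<in> S t - span_vec k (set vs)"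
    using ws wsv all[rule_format, of t]
    by (auto simp: nth_append indep_lists_in_def indep_list_snoc less_Suc_eq)
  then show "ws \<in> (\<lambda>(vs, v). vs @ [v]) ` (SIGMA vs:indep_lists_in k S t. S t - span_vec k (set vs))"
    using wsv by force
next
  fix ws assume "ws \<in> (\<lambda>(vs, v). vs @ [v]) ` (SIGMA vs:indep_lists_in k S t. S t - span_vec k (set vs))"
  then obtain vs v where ws: "ws = vs @ [v]" and vs: "vs \<in> indep_lists_in k S t"
    and v: "v \<in> S t" "v \<notin> span_vec k (set vs)" by auto
  moreover have "v \<in> carrier_vec k" using v assms by blast
  ultimately show "ws \<in> indep_lists_in k S (Suc t)"
    by (auto simp: indep_lists_in_def indep_list_snoc nth_append less_Suc_eq)
qed

lemma finite_indep_lists_in: "finite (indep_lists_in k (S :: nat \<Rightarrow> 'a::{finite,field} vec set) t)"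
proof (rule finite_subset)
  show "indep_lists_in k S t \<subseteq> {vs. set vs \<subseteq> carrier_vec k \<and> length vs = t}"
    by (auto simp: indep_lists_in_def indep_list_def)
qed (rule finite_lists_length_eq, simp)

lemma card_indep_lists_in:
  fixes S :: "nat \<Rightarrow> 'a::{finite,field} vec set"
  assumes sub: "\<And>i. is_subspace k (S i)" and mono: "\<And>i j. i \<le> j \<Longrightarrow> S i \<subseteq> S j"
  shows "card (indep_lists_in k S t) = (\<Prod>i<t. card (S i) - CARD('a) ^ i)"
proof (induction t)
  case 0
  have "indep_lists_in k S 0 = {[]}" by (auto simp: indep_lists_in_def)
  then show ?case by simp
next
  case (Suc t)
  have card_diff: "card (S t - span_vec k (set vs)) = card (S t) - CARD('a) ^ t"
    if "vs \<in> indep_lists_in k S t" for vs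
  proof -
    have ind: "indep_list k vs" and l: "length vs = t" and vsS: "\<forall>j<t. vs ! j \<in> S j"
      using that by (auto simp: indep_lists_in_def)
    have "set vs \<subseteq> S t"
    proof
      fix x assume "x \<in> set vs"
      then obtain j where "j < t" "x = vs ! j" using l by (auto simp: in_set_conv_nth)
      then show "x \<in> S t" using vsS mono[of j t] by auto
    qed
    then have "span_vec k (set vs) \<subseteq> S t" by (rule span_vec_least[OF sub])
    then show ?thesis
      using card_span_vec_indep_list[OF ind] l is_subspace_finite[OF sub]
      by (simp add: card_Diff_subset finite_subset)
  qed
  have inj: "inj_on (\<lambda>(vs, v). vs @ [v]) X" for X :: "('a vec list \<times> 'a vec) set"
    by (auto simp: inj_on_def)
  have "card (indep_lists_in k S (Suc t))
      = card (SIGMA vs:indep_lists_in k S t. S t - span_vec k (set vs))"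
    using indep_lists_in_Suc[OF is_subspaceD(1)[OF sub]] by (simp add: card_image[OF inj])
  also have "\<dots> = (\<Sum>vs\<in>indep_lists_in k S t. card (S t - span_vec k (set vs)))"
    using finite_indep_lists_in is_subspace_finite[OF sub] by (intro card_SigmaI) auto
  also have "\<dots> = (\<Sum>vs\<in>indep_lists_in k S t. card (S t) - CARD('a) ^ t)"
    using card_diff by (rule sum.cong[OF refl])
  finally show ?case using Suc.IH by simp
qed

definition GL :: "nat \<Rightarrow> 'a::field mat set" where
  "GL k = {Q \<in> carrier_mat k k. mat_range Q = carrier_vec k}"

lemma GL_carrier: "Q \<in> GL k \<Longrightarrow> Q \<in> carrier_mat k k"
  by (simp add: GL_def)

lemma finite_GL: "finite (GL k :: 'a::{finite,field} mat set)"
  by (rule finite_subset[of _ "carrier_mat k k"]) (auto simp: GL_def)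

lemma GL_iff_indep_list_cols:
  fixes Q :: "'a::{finite,field} mat"
  assumes Q: "Q \<in> carrier_mat k k"
  shows "Q \<in> GL k \<longleftrightarrow> indep_list k (cols Q)"
proof -
  have sc: "set (cols Q) \<subseteq> carrier_vec k" using Q cols_dim by blast
  have "indep_list k (cols Q) \<longleftrightarrow> card (mat_range Q) = card (carrier_vec k :: 'a vec set)"
    using card_span_vec_list_eq_iff[OF sc] Q
    by (simp add: mat_range_eq_span_vec[OF Q] card_carrier_vec)
  also have "\<dots> \<longleftrightarrow> mat_range Q = carrier_vec k"
    using mat_range_carrier[OF Q] by (metis card_subset_eq finite_carrier_vec)
  finally show ?thesis using Q by (simp add: GL_def)
qed

lemma GL_inverse:
  fixes Q :: "'a::{finite,field} mat"
  assumes Q: "Q \<in> GL k"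
  obtains P where "P \<in> carrier_mat k k" "P * Q = 1\<^sub>m k" "Q * P = 1\<^sub>m k"
proof -
  have Qc: "Q \<in> carrier_mat k k" and surj: "(\<lambda>x. Q *\<^sub>v x) ` carrier_vec k = carrier_vec k"
    using Q unfolding GL_def mat_range_def by auto
  have inj: "inj_on (\<lambda>x. Q *\<^sub>v x) (carrier_vec k)"
    by (rule eq_card_imp_inj_on) (simp_all add: surj)
  have "det Q \<noteq> 0"
  proof
    assume "det Q = 0"
    then obtain v where "v \<in> carrier_vec k" "v \<noteq> 0\<^sub>v k" "Q *\<^sub>v v = 0\<^sub>v k"
      using det_0_iff_vec_prod_zero[OF Qc] by blast
    then show False
      using inj mult_mat_zero_vec[OF Qc] unfolding inj_on_def by (metis zero_carrier_vec)
  qed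
  then have "Q \<in> Units (ring_mat TYPE('a) k undefined)" by (rule det_non_zero_imp_unit[OF Qc])
  then show ?thesis using that unfolding Units_def ring_mat_def by auto
qed

lemma bij_betw_cols_GL:
  fixes P :: "'a::{finite,field} vec list \<Rightarrow> bool"
  shows "bij_betw cols {Q \<in> GL k. P (cols Q)} {vs. length vs = k \<and> indep_list k vs \<and> P vs}"
proof (rule bij_betwI[where g = "mat_of_cols k"])
  have cols_inv: "cols (mat_of_cols k vs) = vs" if "indep_list k vs" for vs
    using that unfolding indep_list_def by (intro cols_mat_of_cols) auto
  show "cols \<in> {Q \<in> GL k. P (cols Q)} \<rightarrow> {vs. length vs = k \<and> indep_list k vs \<and> P vs}"
  proof
    fix Q assume "Q \<in> {Q \<in> GL k. P (cols Q)}"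
    then have Q: "Q \<in> carrier_mat k k" "Q \<in> GL k" "P (cols Q)" by (auto simp: GL_def)
    then show "cols Q \<in> {vs. length vs = k \<and> indep_list k vs \<and> P vs}"
      using GL_iff_indep_list_cols[OF Q(1)] by simp
  qed
  show "mat_of_cols k \<in> {vs. length vs = k \<and> indep_list k vs \<and> P vs} \<rightarrow> {Q \<in> GL k. P (cols Q)}"
  proof
    fix vs assume vs: "vs \<in> {vs. length vs = k \<and> indep_list k vs \<and> P vs}"
    then have Qc: "mat_of_cols k vs \<in> carrier_mat k k" and "cols (mat_of_cols k vs) = vs"
      using cols_inv by auto
    then show "mat_of_cols k vs \<in> {Q \<in> GL k. P (cols Q)}"
      using GL_iff_indep_list_cols[OF Qc] vs by auto
  qed
  show "mat_of_cols k (cols Q) = Q" if "Q \<in> {Q \<in> GL k. P (cols Q)}" for Q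
    using that by (auto simp: GL_def)
  show "cols (mat_of_cols k vs) = vs" if "vs \<in> {vs. length vs = k \<and> indep_list k vs \<and> P vs}" for vs
    using that cols_inv by auto
qed

lemma span_vec_indep_list_eq_iff:
  fixes vs :: "'a::{finite,field} vec list"
  assumes ind: "indep_list k vs" and V: "is_subspace k V" and card: "card V = CARD('a) ^ length vs"
  shows "span_vec k (set vs) = V \<longleftrightarrow> set vs \<subseteq> V"
  using span_vec_superset span_vec_least[OF V] card_span_vec_indep_list[OF ind] card
    is_subspace_finite[OF V] by (metis card_subset_eq)

lemma card_GL_span_take_cols:
  fixes V :: "'a::{finite,field} vec set"
  assumes V: "is_subspace k V" and card: "card V = CARD('a) ^ r" and r: "r \<le> k"
  shows "card {Q \<in> GL k. span_vec k (set (take r (cols Q))) = V}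
    = (\<Prod>i<r. CARD('a) ^ r - CARD('a) ^ i) * (\<Prod>i\<in>{r..<k}. CARD('a) ^ k - CARD('a) ^ i)"
proof -
  let ?q = "CARD('a)"
  define S where "S i = (if i < r then V else carrier_vec k)" for i
  have Vc: "V \<subseteq> carrier_vec k" using is_subspaceD(1)[OF V] .
  have sub: "is_subspace k (S i)" for i using V is_subspace_carrier unfolding S_def by auto
  have mono: "S i \<subseteq> S j" if "i \<le> j" for i j using that Vc unfolding S_def by auto
  have "span_vec k (set (take r vs)) = V \<longleftrightarrow> (\<forall>j<k. vs ! j \<in> S j)"
    if "length vs = k" "indep_list k vs" for vs
  proof -
    have "span_vec k (set (take r vs)) = V \<longleftrightarrow> set (take r vs) \<subseteq> V"
      using that r card by (intro span_vec_indep_list_eq_iff indep_list_take V) (auto simp: min_def)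
    also have "\<dots> \<longleftrightarrow> (\<forall>j<k. vs ! j \<in> S j)"
      using that r unfolding S_def indep_list_def
      by (auto simp: set_conv_nth)
    finally show ?thesis .
  qed
  then have lists: "{vs. length vs = k \<and> indep_list k vs \<and> span_vec k (set (take r vs)) = V}
      = indep_lists_in k S k"
    unfolding indep_lists_in_def by blast
  have "card {Q \<in> GL k. span_vec k (set (take r (cols Q))) = V}
      = card {vs. length vs = k \<and> indep_list k vs \<and> span_vec k (set (take r vs)) = V}"
    by (rule bij_betw_same_card[OF bij_betw_cols_GL])
  also have "\<dots> = card (indep_lists_in k S k)" unfolding lists ..
  also have "\<dots> = (\<Prod>i<k. card (S i) - ?q ^ i)" by (rule card_indep_lists_in[OF sub mono])
  also have "\<dots> = (\<Prod>i<r. card (S i) - ?q ^ i) * (\<Prod>i\<in>{r..<k}. card (S i) - ?q ^ i)"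
    using r by (simp add: lessThan_atLeast0 prod.atLeastLessThan_concat)
  also have "\<dots> = (\<Prod>i<r. ?q ^ r - ?q ^ i) * (\<Prod>i\<in>{r..<k}. ?q ^ k - ?q ^ i)"
    by (simp add: S_def card lessThan_atLeast0 card_carrier_vec)
  finally show ?thesis .
qed

lemma card_GL: "card (GL k :: 'a::{finite,field} mat set) = (\<Prod>i<k. CARD('a) ^ k - CARD('a) ^ i)"
  using card_GL_span_take_cols[OF is_subspace_zero, where r = 0 and k = k and 'a = 'a]
  by (simp add: span_vec_empty lessThan_atLeast0)

lemma card_span_vec_take_cols_GL:
  fixes Q :: "'a::{finite,field} mat"
  assumes "Q \<in> GL k" and "r \<le> k"
  shows "card (span_vec k (set (take r (cols Q)))) = CARD('a) ^ r"
  using assms card_span_vec_indep_list[OF indep_list_take] GL_iff_indep_list_cols GL_carrier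
  by (metis carrier_matD(2) cols_length length_take min.absorb_iff2)

section \<open>The reachable subspace\<close>

text \<open>Defined by minimality, so that invariance arguments are immediate; it is shown below to be
  the column space of \<open>reach_mat A B\<close>.\<close>

definition reach_space :: "'a::field mat \<Rightarrow> 'a mat \<Rightarrow> 'a vec set" where
  "reach_space A B =
     \<Inter>{V. is_subspace (dim_row A) V \<and> mat_range B \<subseteq> V \<and> (\<forall>x\<in>V. A *\<^sub>v x \<in> V)}"

context
  fixes A B :: "'a::field mat" and k m :: nat
  assumes A: "A \<in> carrier_mat k k" and B: "B \<in> carrier_mat k m"
begin

lemma is_subspace_reach_space: "is_subspace k (reach_space A B)"
proof -
  have "carrier_vec k \<in> {V. is_subspace k V \<and> mat_range B \<subseteq> V \<and> (\<forall>x\<in>V. A *\<^sub>v x \<in> V)}"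
    using A mat_range_carrier[OF B] is_subspace_carrier by auto
  then show ?thesis unfolding reach_space_def using A by (intro is_subspace_Inter) auto
qed

lemma reach_space_carrier: "reach_space A B \<subseteq> carrier_vec k"
  using is_subspaceD(1)[OF is_subspace_reach_space] .

lemma mat_range_subset_reach_space: "mat_range B \<subseteq> reach_space A B"
  unfolding reach_space_def by auto

lemma reach_space_invariant: "x \<in> reach_space A B \<Longrightarrow> A *\<^sub>v x \<in> reach_space A B"
  unfolding reach_space_def by auto

lemma reach_space_least:
  "is_subspace k V \<Longrightarrow> mat_range B \<subseteq> V \<Longrightarrow> (\<And>x. x \<in> V \<Longrightarrow> A *\<^sub>v x \<in> V) \<Longrightarrow> reach_space A B \<subseteq> V"
  unfolding reach_space_def using A by auto

lemma col_mem_reach_space: "i < m \<Longrightarrow> col B i \<in> reach_space A B"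
  using col_mem_mat_range[OF B] mat_range_subset_reach_space by blast

end

lemma reach_space_intertwine:
  fixes A A1 B1 J :: "'a::field mat"
  assumes A: "A \<in> carrier_mat k k" and A1: "A1 \<in> carrier_mat r r" and B1: "B1 \<in> carrier_mat r m"
    and J: "J \<in> carrier_mat k r" and AJ: "A * J = J * A1"
  shows "reach_space A (J * B1) = (\<lambda>x. J *\<^sub>v x) ` reach_space A1 B1"
proof
  have JB1: "J * B1 \<in> carrier_mat k m" using J B1 by simp
  have comm: "A *\<^sub>v (J *\<^sub>v z) = J *\<^sub>v (A1 *\<^sub>v z)" if "z \<in> carrier_vec r" for z
    using that A A1 J AJ by (metis assoc_mult_mat_vec)
  have JB: "(J * B1) *\<^sub>v y = J *\<^sub>v (B1 *\<^sub>v y)" if "y \<in> carrier_vec m" for y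
    using that J B1 by (simp add: assoc_mult_mat_vec)
  note R1 = reach_space_carrier[OF A1 B1] mat_range_subset_reach_space[OF A1 B1]
    reach_space_invariant[OF A1 B1]
  show "reach_space A (J * B1) \<subseteq> (\<lambda>x. J *\<^sub>v x) ` reach_space A1 B1"
  proof (rule reach_space_least[OF A JB1 is_subspace_image[OF J is_subspace_reach_space[OF A1 B1]]])
    show "mat_range (J * B1) \<subseteq> (\<lambda>x. J *\<^sub>v x) ` reach_space A1 B1"
      using JB R1(2) J B1 by (force simp: mat_range_def)
    show "A *\<^sub>v x \<in> (\<lambda>x. J *\<^sub>v x) ` reach_space A1 B1" if "x \<in> (\<lambda>x. J *\<^sub>v x) ` reach_space A1 B1" for x
      using that comm R1(1,3) by force
  qed
  let ?W = "{z \<in> carrier_vec r. J *\<^sub>v z \<in> reach_space A (J * B1)}"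
  have "reach_space A1 B1 \<subseteq> ?W"
  proof (rule reach_space_least[OF A1 B1 is_subspace_preimage[OF J is_subspace_reach_space[OF A JB1]]])
    show "mat_range B1 \<subseteq> ?W"
      using JB mat_range_subset_reach_space[OF A JB1] J B1 by (force simp: mat_range_def)
    show "A1 *\<^sub>v z \<in> ?W" if "z \<in> ?W" for z
      using that comm[symmetric] reach_space_invariant[OF A JB1] A1 by auto
  qed
  then show "(\<lambda>x. J *\<^sub>v x) ` reach_space A1 B1 \<subseteq> reach_space A (J * B1)" by auto
qed

lemma reach_space_change_basis:
  fixes A B P Q :: "'a::field mat"
  assumes A: "A \<in> carrier_mat k k" and B: "B \<in> carrier_mat k m"
    and P: "P \<in> carrier_mat k k" and Q: "Q \<in> carrier_mat k k" and QP: "Q * P = 1\<^sub>m k"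
  shows "reach_space (P * A * Q) (P * B) = (\<lambda>x. P *\<^sub>v x) ` reach_space A B"
proof (rule reach_space_intertwine[OF _ A B P])
  show "P * A * Q \<in> carrier_mat k k" using P A Q by simp
  have "P * A * Q * P = P * A * (Q * P)" using P A Q by (simp add: assoc_mult_mat[of _ k k _ k _ k])
  then show "P * A * Q * P = P * A" using QP P A by simp
qed

lemma pow_mat_Suc_left: "A \<in> carrier_mat k k \<Longrightarrow> A ^\<^sub>m Suc j = A * A ^\<^sub>m j"
proof (induction j)
  case (Suc j)
  then have "A * A ^\<^sub>m Suc j = (A * A ^\<^sub>m j) * A" by (simp add: assoc_mult_mat[of _ k k _ k _ k])
  then show ?case using Suc by simp
qed simp

lemma mono_bounded_nat_seq_stalls:
  fixes d :: "nat \<Rightarrow> nat"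
  assumes "mono d" and "\<And>t. d t \<le> k"
  shows "\<exists>t\<le>k. d (Suc t) = d t"
proof (rule ccontr)
  assume "\<not> ?thesis"
  then have "d t < d (Suc t)" if "t \<le> k" for t
    using that \<open>mono d\<close> by (metis le_SucI le_neq_implies_less monoD order_refl)
  then have "t \<le> d t" if "t \<le> Suc k" for t
    using that by (induction t) (auto simp: Suc_le_eq intro: le_less_trans)
  then show False using assms(2)[of "Suc k"] by (metis not_less_eq_eq order_refl)
qed

definition krylov_cols :: "'a::field mat \<Rightarrow> 'a mat \<Rightarrow> nat \<Rightarrow> 'a vec list" where
  "krylov_cols A B t = concat (map (\<lambda>j. cols (A ^\<^sub>m j * B)) [0..<t])"

definition krylov_space :: "'a::field mat \<Rightarrow> 'a mat \<Rightarrow> nat \<Rightarrow> 'a vec set" where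
  "krylov_space A B t = span_vec (dim_row A) (set (krylov_cols A B t))"

lemma reach_mat_krylov_cols: "reach_mat A B = mat_of_cols (dim_row A) (krylov_cols A B (dim_row A))"
  by (simp add: reach_mat_def krylov_cols_def)

context
  fixes A B :: "'a::field mat" and k m :: nat
  assumes A: "A \<in> carrier_mat k k" and B: "B \<in> carrier_mat k m"
begin

lemma set_krylov_cols: "set (krylov_cols A B t) = {A ^\<^sub>m j *\<^sub>v col B i | j i. j < t \<and> i < m}"
proof -
  have "set (cols (A ^\<^sub>m j * B)) = {A ^\<^sub>m j *\<^sub>v col B i | i. i < m}" for j
    using A B by (auto simp: cols_def col_mult2[of _ k k _ m])
  then show ?thesis unfolding krylov_cols_def by fastforce
qed

lemma krylov_cols_carrier: "set (krylov_cols A B t) \<subseteq> carrier_vec k"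
  unfolding set_krylov_cols using A B by (auto intro!: mult_mat_vec_carrier[of _ k k])

lemma krylov_space_eq: "krylov_space A B t = span_vec k (set (krylov_cols A B t))"
  using A by (simp add: krylov_space_def)

lemma is_subspace_krylov_space: "is_subspace k (krylov_space A B t)"
  unfolding krylov_space_eq by (rule span_vec_is_subspace[OF krylov_cols_carrier])

lemma mult_pow_mat_vec: "v \<in> carrier_vec k \<Longrightarrow> A *\<^sub>v (A ^\<^sub>m j *\<^sub>v v) = A ^\<^sub>m Suc j *\<^sub>v v"
  using assoc_mult_mat_vec[OF A pow_carrier_mat[OF A], of v j] unfolding pow_mat_Suc_left[OF A]
  by simp

lemma pow_mult_mem_reach_space: "v \<in> reach_space A B \<Longrightarrow> A ^\<^sub>m j *\<^sub>v v \<in> reach_space A B"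
proof (induction j)
  case 0
  then show ?case using reach_space_carrier[OF A B] A by auto
next
  case (Suc j)
  then show ?case
    using reach_space_invariant[OF A B] reach_space_carrier[OF A B] mult_pow_mat_vec by force
qed

lemma krylov_space_subset_reach_space: "krylov_space A B t \<subseteq> reach_space A B"
  unfolding krylov_space_eq using pow_mult_mem_reach_space col_mem_reach_space[OF A B]
  by (intro span_vec_least[OF is_subspace_reach_space[OF A B]]) (auto simp: set_krylov_cols)

lemma krylov_space_mono: "s \<le> t \<Longrightarrow> krylov_space A B s \<subseteq> krylov_space A B t"
  unfolding krylov_space_eq
  by (intro span_vec_mono krylov_cols_carrier) (fastforce simp: set_krylov_cols intro: less_le_trans)

lemma mat_range_subset_krylov_space: "mat_range B \<subseteq> krylov_space A B (Suc t)"
proof (rule mat_range_subset[OF B is_subspace_krylov_space])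
  fix i assume "i < m"
  then have "A ^\<^sub>m 0 *\<^sub>v col B i \<in> set (krylov_cols A B (Suc t))"
    unfolding set_krylov_cols by blast
  moreover have "A ^\<^sub>m 0 *\<^sub>v col B i = col B i" using A B \<open>i < m\<close> by simp
  ultimately show "col B i \<in> krylov_space A B (Suc t)"
    unfolding krylov_space_eq using span_vec_superset by fastforce
qed

lemma mult_mem_krylov_space:
  assumes "x \<in> krylov_space A B t"
  shows "A *\<^sub>v x \<in> krylov_space A B (Suc t)"
proof -
  let ?K = "krylov_space A B (Suc t)"
  have "set (krylov_cols A B t) \<subseteq> {x \<in> carrier_vec k. A *\<^sub>v x \<in> ?K}"
  proof
    fix x assume "x \<in> set (krylov_cols A B t)"
    then obtain j i where x: "x = A ^\<^sub>m j *\<^sub>v col B i" "j < t" "i < m"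
      unfolding set_krylov_cols by auto
    then have "A *\<^sub>v x = A ^\<^sub>m Suc j *\<^sub>v col B i" using mult_pow_mat_vec B by simp
    moreover have "A ^\<^sub>m Suc j *\<^sub>v col B i \<in> set (krylov_cols A B (Suc t))"
      unfolding set_krylov_cols using x(2,3)
      by (intro CollectI exI[of _ "Suc j"] exI[of _ i]) simp
    ultimately have "A *\<^sub>v x \<in> ?K" unfolding krylov_space_eq using span_vec_superset by (metis subsetD)
    moreover have "x \<in> carrier_vec k"
      using x A B by (metis carrier_matD(1) col_dim mult_mat_vec_carrier pow_carrier_mat)
    ultimately show "x \<in> {x \<in> carrier_vec k. A *\<^sub>v x \<in> ?K}" by simp
  qed
  then have "krylov_space A B t \<subseteq> {x \<in> carrier_vec k. A *\<^sub>v x \<in> ?K}"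
    unfolding krylov_space_eq[of t]
    by (intro span_vec_least is_subspace_preimage[OF A is_subspace_krylov_space])
  then show ?thesis using assms by blast
qed

end

context
  fixes A B :: "'a::{finite,field} mat" and k m :: nat
  assumes A: "A \<in> carrier_mat k k" and B: "B \<in> carrier_mat k m"
begin

text \<open>The dimensions of the Krylov spaces increase and are bounded by $k$.\<close>

lemma krylov_space_stalls: "\<exists>t\<le>k. krylov_space A B (Suc t) = krylov_space A B t"
proof -
  define d where "d t = vec_space.rank k (mat_of_cols k (krylov_cols A B t))" for t
  have card_K: "card (krylov_space A B t) = CARD('a) ^ d t" for t
    using card_mat_range[of "mat_of_cols k (krylov_cols A B t)" k] mat_range_eq_span_vec
      cols_mat_of_cols[OF krylov_cols_carrier[OF A B]]
    unfolding krylov_space_eq[OF A B] d_def by (metis mat_of_cols_carrier(1))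
  have finK: "finite (krylov_space A B t)" for t
    by (rule is_subspace_finite[OF is_subspace_krylov_space[OF A B]])
  have "mono d"
  proof
    fix s t :: nat assume "s \<le> t"
    then have "card (krylov_space A B s) \<le> card (krylov_space A B t)"
      using krylov_space_mono[OF A B] finK by (metis card_mono)
    then show "d s \<le> d t"
      using card_K CARD_field_ge_2[where 'a = 'a] by (metis power_le_imp_le_exp Suc_1 Suc_le_lessD)
  qed
  moreover have "d t \<le> k" for t unfolding d_def by (rule rank_le_dim_row[OF mat_of_cols_carrier(1)])
  ultimately obtain t where "t \<le> k" "d (Suc t) = d t" using mono_bounded_nat_seq_stalls by blast
  then show ?thesis
    using krylov_space_mono[OF A B, of t "Suc t"] card_K finK
    by (metis card_subset_eq le_SucI order_refl)
qed

lemma reach_space_eq_krylov_space: "reach_space A B = krylov_space A B k"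
proof
  show "krylov_space A B k \<subseteq> reach_space A B" by (rule krylov_space_subset_reach_space[OF A B])
  obtain t where t: "t \<le> k" "krylov_space A B (Suc t) = krylov_space A B t"
    using krylov_space_stalls by blast
  have "reach_space A B \<subseteq> krylov_space A B t"
    using mat_range_subset_krylov_space[OF A B, of t] mult_mem_krylov_space[OF A B, of _ t] t(2)
    by (intro reach_space_least[OF A B is_subspace_krylov_space[OF A B]]) auto
  also have "\<dots> \<subseteq> krylov_space A B k" by (rule krylov_space_mono[OF A B t(1)])
  finally show "reach_space A B \<subseteq> krylov_space A B k" .
qed

lemma card_reach_space: "card (reach_space A B) = CARD('a) ^ vec_space.rank k (reach_mat A B)"
proof -
  have M: "reach_mat A B = mat_of_cols k (krylov_cols A B k)"
    using A by (simp add: reach_mat_krylov_cols)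
  have "mat_range (reach_mat A B) = reach_space A B"
    unfolding M reach_space_eq_krylov_space krylov_space_eq[OF A B]
    using mat_range_eq_span_vec[OF mat_of_cols_carrier(1)]
      cols_mat_of_cols[OF krylov_cols_carrier[OF A B]]
    by metis
  then show ?thesis using card_mat_range[of "reach_mat A B"] M by (metis mat_of_cols_carrier(1))
qed

lemma rank_reach_mat_iff_card:
  "vec_space.rank k (reach_mat A B) = r \<longleftrightarrow> card (reach_space A B) = CARD('a) ^ r"
  using card_reach_space CARD_field_ge_2[where 'a = 'a]
  by (metis power_inject_exp Suc_1 Suc_le_lessD)

end

section \<open>Block triangular pairs\<close>

definition embed_mat :: "nat \<Rightarrow> nat \<Rightarrow> 'a::field mat" where
  "embed_mat k r = mat k r (\<lambda>(i, j). if i = j then 1 else 0)"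

definition coord_subspace :: "nat \<Rightarrow> nat \<Rightarrow> 'a::field vec set" where
  "coord_subspace r k = mat_range (embed_mat k r)"

lemma embed_mat_carrier [simp]: "embed_mat k r \<in> carrier_mat k r"
  and dim_embed_mat [simp]: "dim_row (embed_mat k r) = k" "dim_col (embed_mat k r) = r"
  by (simp_all add: embed_mat_def)

lemma col_embed_mat: "j < r \<Longrightarrow> r \<le> k \<Longrightarrow> col (embed_mat k r) j = unit_vec k j"
  by (intro eq_vecI) (auto simp: embed_mat_def)

lemma row_embed_mat: "i < k \<Longrightarrow> row (embed_mat k r) i = (if i < r then unit_vec r i else 0\<^sub>v r)"
  by (intro eq_vecI) (auto simp: embed_mat_def)

lemma index_embed_mat_mult_vec:
  "x \<in> carrier_vec r \<Longrightarrow> i < k \<Longrightarrow> (embed_mat k r *\<^sub>v x) $ i = (if i < r then x $ i else 0)"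
  by (simp add: row_embed_mat)

lemma inj_on_embed_mat: "r \<le> k \<Longrightarrow> inj_on (\<lambda>x. embed_mat k r *\<^sub>v x) (carrier_vec r)"
  by (rule inj_onI, rule eq_vecI) (metis index_embed_mat_mult_vec carrier_vecD less_le_trans)+

lemma mem_coord_subspace_iff:
  assumes "r \<le> k"
  shows "x \<in> coord_subspace r k \<longleftrightarrow> x \<in> carrier_vec k \<and> (\<forall>i. r \<le> i \<and> i < k \<longrightarrow> x $ i = 0)"
proof
  show "x \<in> carrier_vec k \<and> (\<forall>i. r \<le> i \<and> i < k \<longrightarrow> x $ i = 0)" if x: "x \<in> coord_subspace r k"
  proof -
    obtain y where "y \<in> carrier_vec r" "x = embed_mat k r *\<^sub>v y"
      using x by (auto simp: coord_subspace_def mat_range_def)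
    then show ?thesis
      using mult_mat_vec_carrier[OF embed_mat_carrier]
      by (simp add: index_embed_mat_mult_vec del: index_mult_mat_vec)
  qed
  assume x: "x \<in> carrier_vec k \<and> (\<forall>i. r \<le> i \<and> i < k \<longrightarrow> x $ i = 0)"
  then have "x = embed_mat k r *\<^sub>v vec r (($) x)"
    using assms by (intro eq_vecI) (auto simp: index_embed_mat_mult_vec simp del: index_mult_mat_vec)
  then show "x \<in> coord_subspace r k" unfolding coord_subspace_def mat_range_def by auto
qed

lemma mult_embed_mat:
  assumes Q: "Q \<in> carrier_mat k k" and r: "r \<le> k"
  shows "Q * embed_mat k r = mat_of_cols k (take r (cols Q))"
proof (rule eq_matI)
  fix i j
  assume "i < dim_row (mat_of_cols k (take r (cols Q)))" "j < dim_col (mat_of_cols k (take r (cols Q)))"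
  then have i: "i < k" and j: "j < r" using Q r by auto
  then have "(Q * embed_mat k r) $$ (i, j) = row Q i \<bullet> unit_vec k j"
    using Q r by (simp add: col_embed_mat)
  also have "\<dots> = Q $$ (i, j)" using Q i j r by simp
  finally show "(Q * embed_mat k r) $$ (i, j) = mat_of_cols k (take r (cols Q)) $$ (i, j)"
    using Q i j r by (simp add: mat_of_cols_def)
qed (use Q r in auto)

lemma image_coord_subspace:
  assumes Q: "Q \<in> carrier_mat k k" and r: "r \<le> k"
  shows "(\<lambda>x. Q *\<^sub>v x) ` coord_subspace r k = span_vec k (set (take r (cols Q)))"
proof -
  let ?M = "mat_of_cols k (take r (cols Q))"
  have "set (take r (cols Q)) \<subseteq> carrier_vec k" using cols_dim[of Q] Q set_take_subset by fastforce
  then have "cols ?M = take r (cols Q)" by (intro cols_mat_of_cols) auto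
  moreover have "(\<lambda>x. Q *\<^sub>v x) ` coord_subspace r k = (\<lambda>x. (Q * embed_mat k r) *\<^sub>v x) ` carrier_vec r"
    unfolding coord_subspace_def mat_range_def image_image
    by (rule image_cong) (simp_all add: assoc_mult_mat_vec[OF Q embed_mat_carrier])
  then have "(\<lambda>x. Q *\<^sub>v x) ` coord_subspace r k = mat_range ?M"
    using mult_embed_mat[OF Q r] Q r by (simp add: mat_range_def min_def)
  moreover have "?M \<in> carrier_mat k r"
    using mat_of_cols_carrier(1)[of k "take r (cols Q)"] Q r by (simp add: min_def split: if_splits)
  ultimately show ?thesis using mat_range_eq_span_vec by metis
qed

lemma split_block_four_block_mat:
  assumes "A1 \<in> carrier_mat r1 c1" "A2 \<in> carrier_mat r1 c2"
    and "A3 \<in> carrier_mat r2 c1" "A4 \<in> carrier_mat r2 c2"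
  shows "split_block (four_block_mat A1 A2 A3 A4) r1 c1 = (A1, A2, A3, A4)"
  using assms unfolding split_block_def Let_def by (auto intro!: eq_matI)

lemma four_block_mult_embed_mat:
  assumes "A1 \<in> carrier_mat r r" "A2 \<in> carrier_mat r s" "A3 \<in> carrier_mat s s"
  shows "four_block_mat A1 A2 (0\<^sub>m s r) A3 * embed_mat (r + s) r = embed_mat (r + s) r * A1"
  using assms by (intro eq_matI) (auto simp: col_embed_mat row_embed_mat)

lemma embed_mat_mult:
  "B1 \<in> carrier_mat r m \<Longrightarrow> embed_mat (r + s) r * B1 = B1 @\<^sub>r 0\<^sub>m s m"
  by (intro eq_matI) (auto simp: row_embed_mat append_rows_def)

lemma reach_space_block_triangular:
  fixes A1 A2 A3 B1 :: "'a::field mat"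
  assumes A1: "A1 \<in> carrier_mat r r" and A2: "A2 \<in> carrier_mat r s" and A3: "A3 \<in> carrier_mat s s"
    and B1: "B1 \<in> carrier_mat r m"
  shows "reach_space (four_block_mat A1 A2 (0\<^sub>m s r) A3) (B1 @\<^sub>r 0\<^sub>m s m)
    = (\<lambda>x. embed_mat (r + s) r *\<^sub>v x) ` reach_space A1 B1"
  using reach_space_intertwine[OF _ A1 B1 embed_mat_carrier four_block_mult_embed_mat[OF A1 A2 A3]]
    A1 A3 embed_mat_mult[OF B1] by simp

lemma reach_space_coord_subspace_zero_entries:
  assumes A: "A \<in> carrier_mat k k" and B: "B \<in> carrier_mat k m" and r: "r \<le> k"
    and R: "reach_space A B = coord_subspace r k" and i: "r \<le> i" "i < k"
  shows "j < r \<Longrightarrow> A $$ (i, j) = 0" and "j < m \<Longrightarrow> B $$ (i, j) = 0"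
proof -
  assume j: "j < r"
  have "unit_vec k j \<in> reach_space A B" unfolding R mem_coord_subspace_iff[OF r] using j by auto
  then have "A *\<^sub>v unit_vec k j \<in> coord_subspace r k" using reach_space_invariant[OF A B] R by auto
  then show "A $$ (i, j) = 0"
    using mult_mat_unit_vec[OF A] j r i A by (auto simp: mem_coord_subspace_iff[OF r])
next
  assume "j < m"
  then have "col B j \<in> coord_subspace r k" using col_mem_reach_space[OF A B] R by auto
  then show "B $$ (i, j) = 0" using i \<open>j < m\<close> B by (auto simp: mem_coord_subspace_iff[OF r])
qed

lemma split_block_append_rows:
  assumes "B1 \<in> carrier_mat r m" "B2 \<in> carrier_mat s m"
  shows "split_block (B1 @\<^sub>r B2) r m = (B1, 0\<^sub>m r 0, B2, 0\<^sub>m s 0)"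
  using assms split_block_four_block_mat[OF assms(1) zero_carrier_mat assms(2) zero_carrier_mat]
  by (simp add: append_rows_def)

lemma block_triangular_decomposition:
  assumes A: "A \<in> carrier_mat (r + s) (r + s)"
    and low: "\<And>i j. r \<le> i \<Longrightarrow> i < r + s \<Longrightarrow> j < r \<Longrightarrow> A $$ (i, j) = 0"
  obtains A1 A2 A3 where "A1 \<in> carrier_mat r r" "A2 \<in> carrier_mat r s" "A3 \<in> carrier_mat s s"
    "A = four_block_mat A1 A2 (0\<^sub>m s r) A3"
proof -
  obtain A1 A2 A3 A4 where sb: "split_block A r r = (A1, A2, A3, A4)" by (metis prod_cases4)
  note blocks = split_block[OF sb carrier_matD[OF A]]
  have "A3 = 0\<^sub>m s r"
  proof (rule eq_matI)
    fix i j assume "i < dim_row (0\<^sub>m s r :: 'a mat)" "j < dim_col (0\<^sub>m s r :: 'a mat)"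
    then have i: "i < s" and j: "j < r" by auto
    have "four_block_mat A1 A2 A3 A4 $$ (r + i, j) = A3 $$ (i, j)" using blocks(1-4) i j by simp
    then show "A3 $$ (i, j) = 0\<^sub>m s r $$ (i, j)" using low[of "r + i" j] blocks(5) i j by simp
  qed (use blocks in auto)
  then show thesis using that blocks A by auto
qed

lemma top_rows_decomposition:
  assumes B: "B \<in> carrier_mat (r + s) m"
    and low: "\<And>i j. r \<le> i \<Longrightarrow> i < r + s \<Longrightarrow> j < m \<Longrightarrow> B $$ (i, j) = 0"
  obtains B1 where "B1 \<in> carrier_mat r m" "B = B1 @\<^sub>r 0\<^sub>m s m"
proof
  show "mat r m (\<lambda>ij. B $$ ij) \<in> carrier_mat r m" by simp
  show "B = mat r m (\<lambda>ij. B $$ ij) @\<^sub>r 0\<^sub>m s m"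
    using B low by (intro eq_matI) (auto simp: append_rows_def)
qed

definition pairs_with_reach_space :: "nat \<Rightarrow> nat \<Rightarrow> 'a::field vec set \<Rightarrow> ('a mat \<times> 'a mat) set" where
  "pairs_with_reach_space k m V =
     {(A, B). A \<in> carrier_mat k k \<and> B \<in> carrier_mat k m \<and> reach_space A B = V}"

lemma pairs_with_reach_space_coord_subspace:
  "pairs_with_reach_space (r + s) m (coord_subspace r (r + s))
    = (\<lambda>((A1, B1), A2, A3). (four_block_mat A1 A2 (0\<^sub>m s r) A3, B1 @\<^sub>r 0\<^sub>m s m))
        ` (pairs_with_reach_space r m (carrier_vec r) \<times> (carrier_mat r s \<times> carrier_mat s s))"
  (is "?P = ?f ` ?D")
proof (intro equalityI subsetI)
  let ?J = "embed_mat (r + s) r"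
  have coord: "coord_subspace r (r + s) = (\<lambda>x. ?J *\<^sub>v x) ` carrier_vec r"
    by (simp add: coord_subspace_def mat_range_def)
  fix p assume "p \<in> ?P"
  then obtain A B where p: "p = (A, B)" and A: "A \<in> carrier_mat (r + s) (r + s)"
    and B: "B \<in> carrier_mat (r + s) m" and R: "reach_space A B = coord_subspace r (r + s)"
    by (auto simp: pairs_with_reach_space_def)
  note zero = reach_space_coord_subspace_zero_entries[OF A B _ R]
  obtain A1 A2 A3 where A1: "A1 \<in> carrier_mat r r" and A2: "A2 \<in> carrier_mat r s"
    and A3: "A3 \<in> carrier_mat s s" and Ablock: "A = four_block_mat A1 A2 (0\<^sub>m s r) A3"
    using block_triangular_decomposition[OF A] zero(1) by auto
  obtain B1 where B1: "B1 \<in> carrier_mat r m" and Bblock: "B = B1 @\<^sub>r 0\<^sub>m s m"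
    using top_rows_decomposition[OF B] zero(2) by auto
  have "(\<lambda>x. ?J *\<^sub>v x) ` reach_space A1 B1 = (\<lambda>x. ?J *\<^sub>v x) ` carrier_vec r"
    using reach_space_block_triangular[OF A1 A2 A3 B1] R coord Ablock Bblock by simp
  then have "reach_space A1 B1 = carrier_vec r"
    using inj_on_image_eq_iff[OF inj_on_embed_mat reach_space_carrier[OF A1 B1]] by simp
  then have "((A1, B1), A2, A3) \<in> ?D" using A1 A2 A3 B1 by (simp add: pairs_with_reach_space_def)
  then show "p \<in> ?f ` ?D"
    using p Ablock Bblock by (intro image_eqI[where x = "((A1, B1), A2, A3)"]) simp_all
next
  fix p assume "p \<in> ?f ` ?D"
  then obtain A1 B1 A2 A3 where p: "p = ?f ((A1, B1), A2, A3)" and A1: "A1 \<in> carrier_mat r r"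
    and B1: "B1 \<in> carrier_mat r m" and R1: "reach_space A1 B1 = carrier_vec r"
    and A2: "A2 \<in> carrier_mat r s" and A3: "A3 \<in> carrier_mat s s"
    by (auto simp: pairs_with_reach_space_def)
  then show "p \<in> ?P"
    using reach_space_block_triangular[OF A1 A2 A3 B1]
    by (auto simp: pairs_with_reach_space_def coord_subspace_def mat_range_def)
qed

lemma card_pairs_with_reach_space_coord_subspace:
  "card (pairs_with_reach_space (r + s) m (coord_subspace r (r + s))
      :: ('a::{finite,field} mat \<times> 'a mat) set)
    = CARD('a) ^ ((r + s) * s)
      * card (pairs_with_reach_space r m (carrier_vec r) :: ('a mat \<times> 'a mat) set)"
proof -
  let ?f = "\<lambda>((A1, B1), A2, A3). (four_block_mat A1 A2 (0\<^sub>m s r) A3, B1 @\<^sub>r (0\<^sub>m s m :: 'a mat))"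
  let ?D = "pairs_with_reach_space r m (carrier_vec r) \<times> (carrier_mat r s \<times> carrier_mat s s)
    :: (('a mat \<times> 'a mat) \<times> 'a mat \<times> 'a mat) set"
  have "inj_on ?f ?D"
  proof (rule inj_on_inverseI)
    fix x :: "('a mat \<times> 'a mat) \<times> 'a mat \<times> 'a mat" assume "x \<in> ?D"
    then obtain A1 B1 A2 A3 where x: "x = ((A1, B1), A2, A3)" and c: "A1 \<in> carrier_mat r r"
      "B1 \<in> carrier_mat r m" "A2 \<in> carrier_mat r s" "A3 \<in> carrier_mat s s"
      by (auto simp: pairs_with_reach_space_def)
    show "(\<lambda>(A, B). case (split_block A r r, split_block B r m) of
        ((A1, A2, _, A3), (B1, _)) \<Rightarrow> ((A1, B1), A2, A3)) (?f x) = x"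
      using split_block_four_block_mat[OF c(1,3) zero_carrier_mat c(4)]
        split_block_append_rows[OF c(2) zero_carrier_mat] x by simp
  qed
  then have "card (pairs_with_reach_space (r + s) m (coord_subspace r (r + s))
      :: ('a mat \<times> 'a mat) set) = card ?D"
    unfolding pairs_with_reach_space_coord_subspace by (rule card_image)
  also have "\<dots> = card (pairs_with_reach_space r m (carrier_vec r) :: ('a mat \<times> 'a mat) set)
      * (CARD('a) ^ (r * s) * CARD('a) ^ (s * s))"
    by (simp add: card_cartesian_product card_carrier_mat)
  finally show ?thesis by (simp add: power_add[symmetric] add_mult_distrib)
qed

section \<open>Counting pairs by the dimension of the reachable subspace\<close>

lemma card_pairs_with_reach_space_change_basis:
  fixes P Q :: "'a::{finite,field} mat"
  assumes P: "P \<in> carrier_mat k k" and Q: "Q \<in> carrier_mat k k"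
    and QP: "Q * P = 1\<^sub>m k" and PQ: "P * Q = 1\<^sub>m k" and V: "V \<subseteq> carrier_vec k"
  shows "card (pairs_with_reach_space k m ((\<lambda>x. P *\<^sub>v x) ` V)) = card (pairs_with_reach_space k m V)"
proof -
  have cancel: "X * (Y * A * X) * Y = A" "X * (Y * B) = B"
    if "X \<in> carrier_mat k k" "Y \<in> carrier_mat k k" "X * Y = 1\<^sub>m k"
      "A \<in> carrier_mat k k" "B \<in> carrier_mat k m" for X Y A B :: "'a mat"
  proof -
    have "X * (Y * A * X) * Y = (X * Y) * A * (X * Y)"
      using that(1,2,4) by (simp add: assoc_mult_mat[of _ k k _ k _ k])
    also have "\<dots> = A" using that(3,4) by simp
    finally show "X * (Y * A * X) * Y = A" .
    show "X * (Y * B) = B" using that by (simp add: assoc_mult_mat[symmetric, of _ k k _ k _ m])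
  qed
  have "Q *\<^sub>v (P *\<^sub>v x) = x" if "x \<in> V" for x
    using that V P Q QP by (metis assoc_mult_mat_vec one_mult_mat_vec subsetD)
  then have QPV: "(\<lambda>x. Q *\<^sub>v x) ` (\<lambda>x. P *\<^sub>v x) ` V = V"
    unfolding image_image by simp
  show ?thesis
  proof (rule sym, rule bij_betw_same_card[of "\<lambda>(A, B). (P * A * Q, P * B)"],
      rule bij_betwI[where g = "\<lambda>(A, B). (Q * A * P, Q * B)"])
    show "(\<lambda>(A, B). (P * A * Q, P * B))
        \<in> pairs_with_reach_space k m V \<rightarrow> pairs_with_reach_space k m ((\<lambda>x. P *\<^sub>v x) ` V)"
      using reach_space_change_basis[OF _ _ P Q QP] P Q by (auto simp: pairs_with_reach_space_def)
    show "(\<lambda>(A, B). (Q * A * P, Q * B))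
        \<in> pairs_with_reach_space k m ((\<lambda>x. P *\<^sub>v x) ` V) \<rightarrow> pairs_with_reach_space k m V"
      using reach_space_change_basis[OF _ _ Q P PQ] P Q QPV by (auto simp: pairs_with_reach_space_def)
  qed (use cancel P Q QP PQ in \<open>auto simp: pairs_with_reach_space_def\<close>)
qed

lemma card_pairs_with_reach_space_GL_span:
  fixes Q :: "'a::{finite,field} mat"
  assumes Q: "Q \<in> GL k" and r: "r \<le> k"
  shows "card (pairs_with_reach_space k m (span_vec k (set (take r (cols Q)))))
    = CARD('a) ^ (k * (k - r))
      * card (pairs_with_reach_space r m (carrier_vec r) :: ('a mat \<times> 'a mat) set)"
proof -
  obtain P where P: "P \<in> carrier_mat k k" "P * Q = 1\<^sub>m k" "Q * P = 1\<^sub>m k" using GL_inverse[OF Q] .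
  have k: "k = r + (k - r)" using r by simp
  have "card (pairs_with_reach_space k m (span_vec k (set (take r (cols Q)))))
      = card (pairs_with_reach_space k m (coord_subspace r k) :: ('a mat \<times> 'a mat) set)"
    unfolding image_coord_subspace[OF GL_carrier[OF Q] r, symmetric]
    by (rule card_pairs_with_reach_space_change_basis[OF GL_carrier[OF Q] P])
      (use mat_range_carrier[OF embed_mat_carrier] in \<open>auto simp: coord_subspace_def\<close>)
  also have "\<dots> = CARD('a) ^ (k * (k - r))
      * card (pairs_with_reach_space r m (carrier_vec r) :: ('a mat \<times> 'a mat) set)"
    using card_pairs_with_reach_space_coord_subspace[of r "k - r" m, where 'a = 'a] k by simp
  finally show ?thesis .
qed

definition reach_rank_pairs :: "nat \<Rightarrow> nat \<Rightarrow> nat \<Rightarrow> ('a::field mat \<times> 'a mat) set" where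
  "reach_rank_pairs k m r = {(A, B). A \<in> carrier_mat k k \<and> B \<in> carrier_mat k m \<and>
     vec_space.rank k (reach_mat A B) = r}"

lemma sum_card_filter_swap:
  assumes "finite X" "finite Y"
  shows "(\<Sum>x\<in>X. card {y \<in> Y. R x y}) = (\<Sum>y\<in>Y. card {x \<in> X. R x y})"
proof -
  have "card {y \<in> Y. R x y} = (\<Sum>y\<in>Y. if R x y then 1 else 0)" for x
    using assms(2) by (simp add: sum.inter_filter[symmetric])
  moreover have "card {x \<in> X. R x y} = (\<Sum>x\<in>X. if R x y then 1 else 0)" for y
    using assms(1) by (simp add: sum.inter_filter[symmetric])
  ultimately show ?thesis using sum.swap by simp
qed

lemma card_GL_span_take_cols_eq_reach_space:
  fixes A B :: "'a::{finite,field} mat"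
  assumes A: "A \<in> carrier_mat k k" and B: "B \<in> carrier_mat k m" and r: "r \<le> k"
  shows "card {Q \<in> GL k. reach_space A B = span_vec k (set (take r (cols Q)))}
    = (if vec_space.rank k (reach_mat A B) = r
       then (\<Prod>i<r. CARD('a) ^ r - CARD('a) ^ i) * (\<Prod>i\<in>{r..<k}. CARD('a) ^ k - CARD('a) ^ i)
       else 0)"
proof (cases "vec_space.rank k (reach_mat A B) = r")
  case True
  then have "card (reach_space A B) = CARD('a) ^ r" using rank_reach_mat_iff_card[OF A B] by simp
  moreover have "{Q \<in> GL k. reach_space A B = span_vec k (set (take r (cols Q)))}
      = {Q \<in> GL k. span_vec k (set (take r (cols Q))) = reach_space A B}" by auto
  ultimately show ?thesis
    using card_GL_span_take_cols[OF is_subspace_reach_space[OF A B] _ r] True by simp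
next
  case False
  then have "card (reach_space A B) \<noteq> CARD('a) ^ r" using rank_reach_mat_iff_card[OF A B] by simp
  then have "{Q \<in> GL k. reach_space A B = span_vec k (set (take r (cols Q)))} = {}"
    using card_span_vec_take_cols_GL[where 'a = 'a, OF _ r] by auto
  then show ?thesis using False by (metis card.empty)
qed

text \<open>Double counting of the triples $(A, B, Q)$ with $Q$ invertible whose first $r$ columns
  span the reachable subspace of $(A, B)$.\<close>

lemma card_reach_rank_pairs_double_count:
  assumes r: "r \<le> k"
  shows "card (reach_rank_pairs k m r :: ('a::{finite,field} mat \<times> 'a mat) set)
      * ((\<Prod>i<r. CARD('a) ^ r - CARD('a) ^ i) * (\<Prod>i\<in>{r..<k}. CARD('a) ^ k - CARD('a) ^ i))
    = card (GL k :: 'a mat set)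
      * (CARD('a) ^ (k * (k - r))
        * card (pairs_with_reach_space r m (carrier_vec r) :: ('a mat \<times> 'a mat) set))"
proof -
  let ?G = "(\<Prod>i<r. CARD('a) ^ r - CARD('a) ^ i) * (\<Prod>i\<in>{r..<k}. CARD('a) ^ k - CARD('a) ^ i)"
  let ?C = "carrier_mat k k \<times> carrier_mat k m :: ('a mat \<times> 'a mat) set"
  let ?R = "\<lambda>(p :: 'a mat \<times> 'a mat) (Q :: 'a mat).
    reach_space (fst p) (snd p) = span_vec k (set (take r (cols Q)))"
  have "(\<Sum>p\<in>?C. card {Q \<in> GL k. ?R p Q}) = (\<Sum>p\<in>?C. if p \<in> reach_rank_pairs k m r then ?G else 0)"
  proof (rule sum.cong[OF refl])
    fix p assume "p \<in> ?C"
    then obtain A B where "p = (A, B)" "A \<in> carrier_mat k k" "B \<in> carrier_mat k m" by auto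
    then show "card {Q \<in> GL k. ?R p Q} = (if p \<in> reach_rank_pairs k m r then ?G else 0)"
      using card_GL_span_take_cols_eq_reach_space[where 'a = 'a, OF _ _ r]
      by (simp add: reach_rank_pairs_def)
  qed
  also have "\<dots> = (\<Sum>p\<in>?C \<inter> reach_rank_pairs k m r. ?G)"
    by (rule sum.inter_restrict[symmetric]) simp
  also have "?C \<inter> reach_rank_pairs k m r = reach_rank_pairs k m r"
    by (auto simp: reach_rank_pairs_def)
  finally have pairs_side: "(\<Sum>p\<in>?C. card {Q \<in> GL k. ?R p Q})
      = card (reach_rank_pairs k m r :: ('a mat \<times> 'a mat) set) * ?G" by simp
  have "{p \<in> ?C. ?R p Q} = pairs_with_reach_space k m (span_vec k (set (take r (cols Q))))" for Q
    by (simp add: pairs_with_reach_space_def mem_Times_iff split_def)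
  then have "(\<Sum>Q\<in>GL k. card {p \<in> ?C. ?R p Q}) = card (GL k :: 'a mat set)
      * (CARD('a) ^ (k * (k - r))
        * card (pairs_with_reach_space r m (carrier_vec r) :: ('a mat \<times> 'a mat) set))"
    using card_pairs_with_reach_space_GL_span[where 'a = 'a, OF _ r, of _ m] by simp
  then show ?thesis
    using pairs_side sum_card_filter_swap[of ?C "GL k" ?R] finite_GL[where 'a = 'a] by simp
qed

section \<open>Gaussian binomial coefficients\<close>

lemma qbinom_0 [simp]: "qbinom q k 0 = 1"
  by (simp add: qbinom_def)

lemma qbinom_Suc:
  "qbinom q k (Suc j) = qbinom q k j * ((of_nat q ^ (k - j) - 1) / (of_nat q ^ (j + 1) - 1))"
  by (simp add: qbinom_def)

lemma qbinom_eq_0: "k < j \<Longrightarrow> qbinom q k j = 0"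
  unfolding qbinom_def by (intro prod_zero) (auto intro!: bexI[where x = k])

lemma of_nat_power_minus_1_neq_0: "1 < q \<Longrightarrow> 0 < n \<Longrightarrow> (of_nat q :: rat) ^ n - 1 \<noteq> 0"
  by (metis One_nat_def less_irrefl of_nat_1 of_nat_eq_iff of_nat_power one_less_power
      right_minus_eq)

lemma prod_power_minus_1_neq_0: "1 < q \<Longrightarrow> (\<Prod>i<k. (of_nat q :: rat) ^ (i + 1) - 1) \<noteq> 0"
  using of_nat_power_minus_1_neq_0[of q "Suc i" for i]
  by (simp only: prod_zero_iff[OF finite_lessThan]) simp

lemma prod_power_minus_1_reverse:
  "(\<Prod>i<k. (of_nat q :: rat) ^ (k - i) - 1) = (\<Prod>i<k. of_nat q ^ (i + 1) - 1)"
  by (rule prod.reindex_bij_witness[where i = "\<lambda>i. k - 1 - i" and j = "\<lambda>i. k - 1 - i"])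
    (auto simp: Suc_diff_Suc simp del: power_Suc)

lemma qbinom_self: "1 < q \<Longrightarrow> qbinom q k k = 1"
  unfolding qbinom_def prod_dividef prod_power_minus_1_reverse
  using prod_power_minus_1_neq_0 by simp

lemma qbinom_Suc_Suc:
  "qbinom q (Suc k) (Suc j) = qbinom q k j * ((of_nat q ^ Suc k - 1) / (of_nat q ^ Suc j - 1))"
proof (induction j)
  case 0
  then show ?case by (simp add: qbinom_def)
next
  case (Suc j)
  let ?Q = "of_nat q :: rat"
  have "qbinom q (Suc k) (Suc (Suc j))
      = qbinom q (Suc k) (Suc j) * ((?Q ^ (k - j) - 1) / (?Q ^ (Suc j + 1) - 1))"
    by (simp add: qbinom_Suc)
  also have "\<dots> = qbinom q k j * ((?Q ^ (k - j) - 1) / (?Q ^ (j + 1) - 1))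
      * ((?Q ^ Suc k - 1) / (?Q ^ Suc (Suc j) - 1))"
    using Suc by simp
  also have "\<dots> = qbinom q k (Suc j) * ((?Q ^ Suc k - 1) / (?Q ^ Suc (Suc j) - 1))"
    by (simp add: qbinom_Suc)
  finally show ?case .
qed

text \<open>From $q^{k+1} - 1 = (q^{j+1} - 1) + q^{j+1} (q^{k-j} - 1)$.\<close>

lemma qbinom_pascal:
  assumes q: "1 < q"
  shows "qbinom q (Suc k) (Suc j) = qbinom q k j + of_nat q ^ Suc j * qbinom q k (Suc j)"
proof (cases "j \<le> k")
  case True
  let ?Q = "of_nat q :: rat"
  have ne: "?Q ^ Suc j - 1 \<noteq> 0" by (rule of_nat_power_minus_1_neq_0[OF q]) simp
  have "Suc j + (k - j) = Suc k" using True by simp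
  then have pow: "?Q ^ Suc j * ?Q ^ (k - j) = ?Q ^ Suc k" by (metis power_add)
  have e: "?Q ^ Suc k - 1 = (?Q ^ Suc j - 1) + ?Q ^ Suc j * (?Q ^ (k - j) - 1)"
    unfolding pow[symmetric] by (simp add: algebra_simps del: power_Suc)
  have "qbinom q (Suc k) (Suc j)
      = qbinom q k j * ((?Q ^ Suc j - 1) + ?Q ^ Suc j * (?Q ^ (k - j) - 1)) / (?Q ^ Suc j - 1)"
    unfolding qbinom_Suc_Suc e by simp
  also have "\<dots> = qbinom q k j + ?Q ^ Suc j * (qbinom q k j * ((?Q ^ (k - j) - 1) / (?Q ^ (j + 1) - 1)))"
    using ne by (simp add: field_simps)
  also have "\<dots> = qbinom q k j + ?Q ^ Suc j * qbinom q k (Suc j)" by (simp add: qbinom_Suc)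
  finally show ?thesis .
qed (simp add: qbinom_eq_0)

definition qbinom_term :: "nat \<Rightarrow> nat \<Rightarrow> rat \<Rightarrow> nat \<Rightarrow> rat" where
  "qbinom_term q k x j = qbinom q k j * of_nat q ^ ((k - j)^2) * (\<Prod>t<j. x - of_nat q ^ (k - t))"

lemma sum_qbinom_term_shift:
  "(\<Sum>j\<le>k. qbinom q k j * (of_nat q ^ ((Suc k - Suc j)^2) * (\<Prod>t<Suc j. x - of_nat q ^ (Suc k - t))))
    = (x - of_nat q ^ Suc k) * (\<Sum>j\<le>k. qbinom_term q k x j)"
proof -
  have "qbinom q k j * (of_nat q ^ ((Suc k - Suc j)^2) * (\<Prod>t<Suc j. x - of_nat q ^ (Suc k - t)))
      = (x - of_nat q ^ Suc k) * qbinom_term q k x j" for j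
    unfolding qbinom_term_def prod.lessThan_Suc_shift by (simp add: algebra_simps)
  then show ?thesis by (simp add: sum_distrib_left)
qed

lemma qbinom_term_scale:
  assumes q: "1 < q" and j: "j \<le> k"
  shows "of_nat q ^ j * qbinom q k j * (of_nat q ^ ((Suc k - j)^2) * (\<Prod>t<j. x - of_nat q ^ (Suc k - t)))
    = of_nat q ^ (2 * k + 1) * qbinom_term q k (x / of_nat q) j"
proof -
  let ?Q = "of_nat q :: rat"
  have Q0: "?Q \<noteq> 0" using q by simp
  have "(\<Prod>t<j. x - ?Q ^ (Suc k - t)) = (\<Prod>t<j. ?Q * (x / ?Q - ?Q ^ (k - t)))"
  proof (rule prod.cong)
    fix t assume "t \<in> {..<j}"
    then have "Suc k - t = Suc (k - t)" using j by auto
    then show "x - ?Q ^ (Suc k - t) = ?Q * (x / ?Q - ?Q ^ (k - t))" using Q0 by (simp add: field_simps)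
  qed simp
  then have p: "(\<Prod>t<j. x - ?Q ^ (Suc k - t)) = ?Q ^ j * (\<Prod>t<j. x / ?Q - ?Q ^ (k - t))"
    by (simp add: prod.distrib)
  have "j + (Suc k - j)^2 + j = (k - j)^2 + (2 * k + 1)"
  proof -
    have "Suc k - j = Suc (k - j)" "j + (k - j) = k" using j by auto
    then show ?thesis by (simp add: power2_eq_square algebra_simps)
  qed
  then have "?Q ^ j * ?Q ^ ((Suc k - j)^2) * ?Q ^ j = ?Q ^ ((k - j)^2) * ?Q ^ (2 * k + 1)"
    by (metis power_add)
  then show ?thesis unfolding p qbinom_term_def by (simp add: algebra_simps)
qed

text \<open>A $q$-analogue of $x^k = \sum_j \binom{k}{j} (x - 1)^j$.  In the induction step the
  $q$-Pascal rule splits every term; one half sums to $(x - q^{k+1})\, x^k$, the other to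
  $q^{2k+1} (x/q)^k$.\<close>

lemma qbinom_expansion:
  assumes q: "1 < q"
  shows "(\<Sum>j\<le>k. qbinom_term q k x j) = x ^ k"
proof (induction k arbitrary: x)
  case 0
  then show ?case by (simp add: qbinom_term_def)
next
  case (Suc k)
  let ?Q = "of_nat q :: rat"
  define W where "W j = ?Q ^ ((Suc k - j)^2) * (\<Prod>t<j. x - ?Q ^ (Suc k - t))" for j
  define lower where "lower j = (case j of 0 \<Rightarrow> 0 | Suc j' \<Rightarrow> qbinom q k j')" for j
  have pascal: "qbinom_term q (Suc k) x j = lower j * W j + ?Q ^ j * qbinom q k j * W j" for j
    unfolding qbinom_term_def W_def lower_def
    by (cases j) (simp_all add: qbinom_pascal[OF q] algebra_simps)
  have "(\<Sum>j\<le>Suc k. lower j * W j) = (\<Sum>j\<le>k. qbinom q k j * W (Suc j))"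
    by (subst sum.atMost_Suc_shift) (simp add: lower_def)
  also have "\<dots> = (x - ?Q ^ Suc k) * (\<Sum>j\<le>k. qbinom_term q k x j)"
    unfolding W_def by (rule sum_qbinom_term_shift)
  finally have S1: "(\<Sum>j\<le>Suc k. lower j * W j) = (x - ?Q ^ Suc k) * x ^ k" using Suc.IH by simp
  have "(\<Sum>j\<le>Suc k. ?Q ^ j * qbinom q k j * W j) = (\<Sum>j\<le>k. ?Q ^ j * qbinom q k j * W j)"
    by (simp add: qbinom_eq_0)
  also have "\<dots> = (\<Sum>j\<le>k. ?Q ^ (2 * k + 1) * qbinom_term q k (x / ?Q) j)"
    unfolding W_def by (rule sum.cong) (simp_all add: qbinom_term_scale[OF q])
  finally have S2: "(\<Sum>j\<le>Suc k. ?Q ^ j * qbinom q k j * W j) = ?Q ^ (2 * k + 1) * (x / ?Q) ^ k"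
    using Suc.IH by (simp add: sum_distrib_left[symmetric])
  have "?Q ^ (2 * k + 1) * (x / ?Q) ^ k = ?Q ^ Suc k * x ^ k"
  proof -
    have "2 * k + 1 = Suc k + k" by simp
    then have "?Q ^ (2 * k + 1) = ?Q ^ Suc k * ?Q ^ k" by (metis power_add)
    then show ?thesis using q by (simp add: power_divide)
  qed
  then show ?case unfolding pascal sum.distrib S1 S2 by (simp add: algebra_simps)
qed

lemma prod_power_diff_eq_qbinom:
  assumes q: "1 < q" and r: "r \<le> k"
  shows "(\<Prod>i<r. (of_nat q :: rat) ^ k - of_nat q ^ i)
    = qbinom q k r * (\<Prod>i<r. of_nat q ^ r - of_nat q ^ i)"
proof -
  let ?Q = "of_nat q :: rat"
  have split: "(\<Prod>i<r. ?Q ^ n - ?Q ^ i) = (\<Prod>i<r. ?Q ^ i) * (\<Prod>i<r. ?Q ^ (n - i) - 1)"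
    if "r \<le> n" for n
  proof -
    have "?Q ^ n - ?Q ^ i = ?Q ^ i * (?Q ^ (n - i) - 1)" if "i < r" for i
    proof -
      have "?Q ^ i * ?Q ^ (n - i) = ?Q ^ n" using that \<open>r \<le> n\<close> by (simp flip: power_add)
      then show ?thesis by (simp add: algebra_simps)
    qed
    then have "(\<Prod>i<r. ?Q ^ n - ?Q ^ i) = (\<Prod>i<r. ?Q ^ i * (?Q ^ (n - i) - 1))"
      by (intro prod.cong) auto
    then show ?thesis by (simp add: prod.distrib)
  qed
  show ?thesis
    unfolding split[OF r] split[OF order_refl] qbinom_def prod_dividef prod_power_minus_1_reverse
    using prod_power_minus_1_neq_0[OF q] by simp
qed

section \<open>The number of pairs of each rank\<close>

lemma of_nat_prod_power_diff:
  assumes "1 \<le> q" "\<And>i. i \<in> I \<Longrightarrow> i \<le> n"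
  shows "(of_nat (\<Prod>i\<in>I. q ^ n - q ^ i) :: rat) = (\<Prod>i\<in>I. of_nat q ^ n - of_nat q ^ i)"
  unfolding of_nat_prod using assms by (intro prod.cong) (simp_all add: of_nat_diff power_increasing)

lemma prod_power_diff_neq_0:
  "1 < q \<Longrightarrow> (\<And>i. i \<in> I \<Longrightarrow> i < n) \<Longrightarrow> finite I \<Longrightarrow>
    (\<Prod>i\<in>I. (of_nat q :: rat) ^ n - of_nat q ^ i) \<noteq> 0"
  by (simp add: prod_zero_iff power_strict_increasing_iff) (meson less_irrefl)

lemma card_reach_rank_pairs:
  assumes r: "r \<le> k"
  shows "(of_nat (card (reach_rank_pairs k m r :: ('a::{finite,field} mat \<times> 'a mat) set)) :: rat)
    = qbinom CARD('a) k r * of_nat CARD('a) ^ (k * (k - r))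
      * of_nat (card (pairs_with_reach_space r m (carrier_vec r) :: ('a mat \<times> 'a mat) set))"
proof -
  let ?q = "CARD('a)"
  let ?Q = "of_nat ?q :: rat"
  let ?N = "of_nat (card (reach_rank_pairs k m r :: ('a mat \<times> 'a mat) set)) :: rat"
  let ?rho = "of_nat (card (pairs_with_reach_space r m (carrier_vec r) :: ('a mat \<times> 'a mat) set)) :: rat"
  let ?low = "\<Prod>i<r. ?Q ^ r - ?Q ^ i" and ?high = "\<Prod>i\<in>{r..<k}. ?Q ^ k - ?Q ^ i"
  have q: "1 < ?q" using CARD_field_ge_2[where 'a = 'a] by simp
  have "card (GL k :: 'a mat set) = (\<Prod>i<r. ?q ^ k - ?q ^ i) * (\<Prod>i\<in>{r..<k}. ?q ^ k - ?q ^ i)"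
    using r by (simp add: card_GL lessThan_atLeast0 prod.atLeastLessThan_concat)
  then have "?N * (?low * ?high) = (\<Prod>i<r. ?Q ^ k - ?Q ^ i) * ?high * (?Q ^ (k * (k - r)) * ?rho)"
    using arg_cong[OF card_reach_rank_pairs_double_count[OF r, of m, where 'a = 'a],
        of "of_nat :: nat \<Rightarrow> rat"] q r
    by (simp add: of_nat_prod_power_diff)
  also have "\<dots> = (qbinom ?q k r * ?Q ^ (k * (k - r)) * ?rho) * (?low * ?high)"
    by (simp add: prod_power_diff_eq_qbinom[OF q r])
  finally show ?thesis
    using prod_power_diff_neq_0[OF q, of "{..<r}" r] prod_power_diff_neq_0[OF q, of "{r..<k}" k] by simp
qed

lemma sum_card_reach_rank_pairs:
  "(\<Sum>r\<le>k. card (reach_rank_pairs k m r :: ('a::{finite,field} mat \<times> 'a mat) set))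
    = CARD('a) ^ (k * k + k * m)"
proof -
  let ?C = "carrier_mat k k \<times> carrier_mat k m :: ('a mat \<times> 'a mat) set"
  have "(\<Sum>r\<le>k. card (reach_rank_pairs k m r :: ('a mat \<times> 'a mat) set))
      = card (\<Union>r\<le>k. reach_rank_pairs k m r :: ('a mat \<times> 'a mat) set)"
    by (rule card_UN_disjoint[symmetric]) (auto simp: reach_rank_pairs_def intro: finite_subset[of _ ?C])
  also have "(\<Union>r\<le>k. reach_rank_pairs k m r) = ?C"
    using rank_le_dim_row[OF mat_of_cols_carrier(1)] by (auto simp: reach_rank_pairs_def reach_mat_def)
  also have "card ?C = CARD('a) ^ (k * k + k * m)"
    by (simp add: card_cartesian_product card_carrier_mat power_add)
  finally show ?thesis .
qed

lemma square_diff_add: "d \<le> (r :: nat) \<Longrightarrow> (r - d)^2 + (r - d) * d = r * (r - d)"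
  by (metis le_add_diff_inverse2 power2_eq_square add_mult_distrib2 mult.commute)

lemma prod_power_diff_shift:
  fixes Q :: "'a::comm_ring_1"
  assumes d: "d \<le> r"
  shows "(\<Prod>t<d. Q ^ (r + m) - Q ^ (r - t)) = Q ^ ((r - d) * d) * (\<Prod>t<d. Q ^ (d + m) - Q ^ (d - t))"
proof -
  have "Q ^ (r + m) - Q ^ (r - t) = Q ^ (r - d) * (Q ^ (d + m) - Q ^ (d - t))" if "t < d" for t
  proof -
    have "r - d + (d + m) = r + m" "r - d + (d - t) = r - t" using d that by auto
    then show ?thesis by (metis power_add right_diff_distrib)
  qed
  then show ?thesis by (simp add: prod.distrib power_mult)
qed

text \<open>Comparing $\sum_d N_d = q^{r(r+m)}$ with the $q$-binomial expansion at $x = q^{r+m}$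
  term by term determines $\rho_r$ from the $\rho_d$, $d < r$.\<close>

lemma card_reachable_pairs:
  "(of_nat (card (pairs_with_reach_space r m (carrier_vec r)
      :: ('a::{finite,field} mat \<times> 'a mat) set)) :: rat)
    = (\<Prod>t<r. of_nat CARD('a) ^ (r + m) - of_nat CARD('a) ^ (r - t))"
proof (induction r rule: less_induct)
  case (less r)
  let ?Q = "of_nat CARD('a) :: rat"
  let ?rho = "\<lambda>d. of_nat (card (pairs_with_reach_space d m (carrier_vec d)
    :: ('a mat \<times> 'a mat) set)) :: rat"
  let ?P = "\<lambda>d. \<Prod>t<d. ?Q ^ (d + m) - ?Q ^ (d - t)"
  let ?c = "\<lambda>d. qbinom CARD('a) r d * ?Q ^ (r * (r - d))"
  have q: "1 < CARD('a)" using CARD_field_ge_2[where 'a = 'a] by simp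
  have "(\<Sum>d\<le>r. ?c d * ?rho d) = ?Q ^ (r * r + r * m)"
    using arg_cong[OF sum_card_reach_rank_pairs[of r m, where 'a = 'a], of "of_nat :: nat \<Rightarrow> rat"]
    by (simp add: card_reach_rank_pairs)
  also have "\<dots> = (\<Sum>d\<le>r. qbinom_term CARD('a) r (?Q ^ (r + m)) d)"
    by (simp add: qbinom_expansion[OF q] power_mult[symmetric] algebra_simps)
  also have "\<dots> = (\<Sum>d\<le>r. ?c d * ?P d)"
  proof (rule sum.cong)
    fix d assume "d \<in> {..r}"
    then have d: "d \<le> r" by simp
    have "qbinom_term CARD('a) r (?Q ^ (r + m)) d
        = qbinom CARD('a) r d * ?Q ^ ((r - d)^2) * (?Q ^ ((r - d) * d) * ?P d)"
      unfolding qbinom_term_def prod_power_diff_shift[OF d] ..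
    also have "\<dots> = qbinom CARD('a) r d * (?Q ^ ((r - d)^2) * ?Q ^ ((r - d) * d)) * ?P d"
      by (simp only: mult.assoc)
    also have "?Q ^ ((r - d)^2) * ?Q ^ ((r - d) * d) = ?Q ^ (r * (r - d))"
      unfolding square_diff_add[OF d, symmetric] power_add ..
    finally show "qbinom_term CARD('a) r (?Q ^ (r + m)) d = ?c d * ?P d" .
  qed simp
  finally have "(\<Sum>d<r. ?c d * ?rho d) + ?c r * ?rho r = (\<Sum>d<r. ?c d * ?P d) + ?c r * ?P r"
    by (simp add: lessThan_Suc_atMost[symmetric])
  then show ?case using less.IH qbinom_self[OF q] by simp
qed

lemma card_reach_rank_pairs_closed_form:
  assumes kn: "k \<le> n" and r: "r \<le> k"
  shows "of_nat (card (reach_rank_pairs k (n - k) r :: ('a::{finite,field} mat \<times> 'a mat) set))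
    = qbinom CARD('a) k r * of_nat CARD('a) ^ ((k - r)^2)
      * (\<Prod>i\<in>{k - r + 1..k}. of_nat CARD('a) ^ n - of_nat CARD('a) ^ i :: rat)"
proof -
  let ?Q = "of_nat CARD('a) :: rat"
  have "k * (k - r) = (k - r)^2 + (k - r) * r"
    using square_diff_add[OF r] by simp
  then have "?Q ^ (k * (k - r)) * (\<Prod>t<r. ?Q ^ (r + (n - k)) - ?Q ^ (r - t))
      = ?Q ^ ((k - r)^2) * (\<Prod>t<r. ?Q ^ n - ?Q ^ (k - t))"
    using prod_power_diff_shift[OF r, of ?Q "n - k"] kn by (simp add: power_add)
  also have "(\<Prod>t<r. ?Q ^ n - ?Q ^ (k - t)) = (\<Prod>i\<in>{k - r + 1..k}. ?Q ^ n - ?Q ^ i)"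
    by (rule prod.reindex_bij_witness[where i = "\<lambda>i. k - i" and j = "\<lambda>t. k - t"]) (use r in auto)
  finally show ?thesis
    using card_reach_rank_pairs[where 'a = 'a, OF r, of "n - k"] card_reachable_pairs[where 'a = 'a]
    by (simp add: algebra_simps)
qed

theorem theorem4:
  fixes n k r :: nat
  assumes "1 \<le> k" and "k < n" and "r \<le> k"
  shows "of_nat (card {(A :: 'a::{finite,field} mat, B).
             A \<in> carrier_mat k k \<and> B \<in> carrier_mat k (n - k) \<and>
             vec_space.rank k (reach_mat A B) = r})
       = qbinom (card (UNIV :: 'a set)) k r * of_nat (card (UNIV :: 'a set)) ^ ((k - r)^2)
         * (\<Prod>i\<in>{k - r + 1..k}. (of_nat (card (UNIV :: 'a set)) ^ n - of_nat (card (UNIV :: 'a set)) ^ i :: rat))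
     \<and> of_nat (card {(A :: 'a mat, B).
             A \<in> carrier_mat k k \<and> B \<in> carrier_mat k (n - k) \<and>
             vec_space.rank k (reach_mat A B) = k})
       = (\<Prod>i\<in>{1..k}. (of_nat (card (UNIV :: 'a set)) ^ n - of_nat (card (UNIV :: 'a set)) ^ i :: rat))"
proof -
  have pairs: "{(A :: 'a mat, B). A \<in> carrier_mat k k \<and> B \<in> carrier_mat k (n - k) \<and>
      vec_space.rank k (reach_mat A B) = d} = reach_rank_pairs k (n - k) d" for d
    by (simp add: reach_rank_pairs_def)
  have "qbinom CARD('a) k k = 1" using CARD_field_ge_2[where 'a = 'a] by (simp add: qbinom_self)
  then show ?thesis
    unfolding pairs using card_reach_rank_pairs_closed_form[where 'a = 'a] assms by simp
qed

end
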